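(* Let $b>0$, $L\in\mathbb{N}$, and $\psi_0\in X_b^{L+1}(\mathbb{R})$ with $(D^s\widehat{\psi_0})(0)=0$ for $s=0,1,\dots,L+1$. For $0\le r\le L+1$ and $k\in\mathbb{N}_0$ define $$\widehat{\Psi}^{r}_k(\xi):=\frac{(D^{r}\widehat{\psi_0})(\xi/2^k)}{(\xi/2^k)^{L+1-r}}.$$ Then for every $0<b'<b$ there is $C_{b'}>0$ (independent of $k$) with $|\mathcal{F}^{-1}[\widehat\Psi^r_k](x)|\le C_{b'}2^ke^{-b'2^k|x|}$ for all $x\in\mathbb{R}$.
   Context: Fourier transform $\widehat f(\xi)=\mathcal{F}f(\xi)=(2\pi)^{-1/2}\int f(x)e^{-i\xi x}dx$, $\mathcal{F}^{-1}$ its inverse. Test function space (one dimension): for $b>0$ and $s\in\mathbb{N}_0$, $X_b^{s}(\mathbb{R})$ is the space of functions $\varphi$ on $\mathbb{R}$ whose distributional derivatives $D^{\alpha}\varphi$, $0\le\alpha\le s$, are functions with $\sum_{0\le\alpha\le s}\sum_{0\le\beta\le s}\|e^{b|x|}x^{\beta}D^{\alpha}\varphi(x)\|_{L^2(\mathbb{R})}<\infty$. *)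

theory Defs
  imports "HOL-Analysis.Analysis"
begin

definition test_function :: "(real \<Rightarrow> real) \<Rightarrow> bool" where
  "test_function \<phi> \<longleftrightarrow>
     (\<forall>n x. (deriv ^^ n) \<phi> differentiable (at x)) \<and>
     (\<exists>R. \<forall>x. R < \<bar>x\<bar> \<longrightarrow> \<phi> x = 0)"

text \<open>The space X_b^s(R): the distributional derivatives D^alpha psi (alpha \<le> s) are
  functions g alpha (with g 0 = psi) such that all weighted norms
  || e^{b|x|} x^beta D^alpha psi ||_{L^2}, 0 \<le> alpha, beta \<le> s, are finite.\<close>
definition X_space :: "real \<Rightarrow> nat \<Rightarrow> (real \<Rightarrow> complex) \<Rightarrow> bool" where
  "X_space b s \<psi> \<longleftrightarrow>
     (\<exists>g :: nat \<Rightarrow> real \<Rightarrow> complex. g 0 = \<psi> \<and>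
       (\<forall>\<alpha>\<le>s.
          g \<alpha> \<in> borel_measurable lborel \<and>
          (\<forall>\<beta>\<le>s. integrable lborel (\<lambda>x. (exp (b * \<bar>x\<bar>) * \<bar>x\<bar> ^ \<beta> * cmod (g \<alpha> x))\<^sup>2)) \<and>
          (\<forall>\<phi>. test_function \<phi> \<longrightarrow>
             (LINT x|lborel. \<psi> x * complex_of_real ((deriv ^^ \<alpha>) \<phi> x))
               = (-1) ^ \<alpha> * (LINT x|lborel. g \<alpha> x * complex_of_real (\<phi> x)))))"

definition fourier :: "(real \<Rightarrow> complex) \<Rightarrow> real \<Rightarrow> complex" where
  "fourier f \<xi> = complex_of_real (1 / sqrt (2 * pi)) * (LINT x|lborel. f x * cis (- (\<xi> * x)))"

definition inv_fourier :: "(real \<Rightarrow> complex) \<Rightarrow> real \<Rightarrow> complex" where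
  "inv_fourier f x = complex_of_real (1 / sqrt (2 * pi)) * (LINT \<xi>|lborel. f \<xi> * cis (\<xi> * x))"

fun cderiv :: "nat \<Rightarrow> (real \<Rightarrow> complex) \<Rightarrow> real \<Rightarrow> complex" where
  "cderiv 0 f = f"
| "cderiv (Suc n) f = (\<lambda>x. vector_derivative (cderiv n f) (at x))"

definition Psi_hat :: "(real \<Rightarrow> complex) \<Rightarrow> nat \<Rightarrow> nat \<Rightarrow> nat \<Rightarrow> real \<Rightarrow> complex" where
  "Psi_hat \<psi>\<^sub>0 L r k \<xi> =
     cderiv r (fourier \<psi>\<^sub>0) (\<xi> / 2 ^ k) / complex_of_real ((\<xi> / 2 ^ k) ^ (L + 1 - r))"

end

theory Submission
  imports Defs "HOL-Complex_Analysis.Complex_Analysis" "HOL-Computational_Algebra.Polynomial"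
    "HOL-Probability.Sinc_Integral"
begin

(*
  The Fourier transform of psi_0 extends holomorphically to the strip |Im z| < b, with derivatives
  given (up to constants) by the moments  fourier_moment psi_0 j z = INT psi_0(x) x^j e^(-izx) dx,
  which converge because psi_0 decays like e^(-b|x|). Integrating by parts against the two weak
  derivatives of psi_0 gives (1 + |z|^2) |fourier_moment psi_0 r z| <= K on |Im z| <= b', and the
  vanishing derivatives at 0 give fourier_moment psi_0 r z = O(|z|^(m+1)) with m = L + 1 - r.
  So h(z) = fourier_moment psi_0 r z / z^m is continuous on the closed strip, holomorphic off 0 and
  O(1 / (1 + (Re z)^2)) there, and moving the line of integration of INT h(xi) e^(i xi y) dxi to
  Im xi = b' sgn y bounds it by C e^(-b'|y|). Finally Psi_hat^r_k(xi) is a constant multiple of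
  h(xi / 2^k), and rescaling produces the factor 2^k and the rate b' 2^k.
*)

section \<open>Smooth real functions\<close>

fun smooth_upto :: "nat \<Rightarrow> (real \<Rightarrow> real) \<Rightarrow> bool" where
  "smooth_upto 0 h \<longleftrightarrow> (\<forall>x. h differentiable (at x))"
| "smooth_upto (Suc n) h \<longleftrightarrow> (\<forall>x. h differentiable (at x)) \<and> smooth_upto n (deriv h)"

lemma deriv_funpow_Suc: "(deriv ^^ Suc k) h = (deriv ^^ k) (deriv h)"
  by (simp add: funpow_Suc_right del: funpow.simps)

lemma smooth_upto_iff:
  "smooth_upto n h \<longleftrightarrow> (\<forall>k\<le>n. \<forall>x. (deriv ^^ k) h differentiable (at x))"
proof (induction n arbitrary: h)
  case 0
  then show ?case by simp
next
  case (Suc n)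
  have "(\<forall>k\<le>Suc n. \<forall>x. (deriv ^^ k) h differentiable (at x)) \<longleftrightarrow>
        (\<forall>x. h differentiable (at x)) \<and> (\<forall>k\<le>n. \<forall>x. (deriv ^^ Suc k) h differentiable (at x))"
    by (auto simp del: funpow.simps) (metis funpow_0 not0_implies_Suc Suc_le_mono)
  then show ?case
    using Suc by (simp only: smooth_upto.simps deriv_funpow_Suc)
qed

lemma smooth_upto_imp_differentiable: "smooth_upto n h \<Longrightarrow> h differentiable (at x)"
  by (cases n) auto

lemma smooth_upto_Suc_imp: "smooth_upto (Suc n) h \<Longrightarrow> smooth_upto n h"
  by (auto simp: smooth_upto_iff)

lemma deriv_add_fun:
  fixes f g :: "real \<Rightarrow> real"
  assumes "\<forall>x. f differentiable (at x)" "\<forall>x. g differentiable (at x)"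
  shows "deriv (\<lambda>x. f x + g x) = (\<lambda>x. deriv f x + deriv g x)"
proof
  fix x
  from assms have "(f has_real_derivative deriv f x) (at x)" "(g has_real_derivative deriv g x) (at x)"
    by (auto simp: DERIV_deriv_iff_real_differentiable)
  then show "deriv (\<lambda>x. f x + g x) x = deriv f x + deriv g x"
    by (intro DERIV_imp_deriv derivative_intros)
qed

lemma deriv_mult_fun:
  fixes f g :: "real \<Rightarrow> real"
  assumes "\<forall>x. f differentiable (at x)" "\<forall>x. g differentiable (at x)"
  shows "deriv (\<lambda>x. f x * g x) = (\<lambda>x. deriv f x * g x + f x * deriv g x)"
proof
  fix x
  from assms have "(f has_real_derivative deriv f x) (at x)" "(g has_real_derivative deriv g x) (at x)"
    by (auto simp: DERIV_deriv_iff_real_differentiable)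
  then show "deriv (\<lambda>x. f x * g x) x = deriv f x * g x + f x * deriv g x"
    by (intro DERIV_imp_deriv) (auto intro!: derivative_eq_intros)
qed

lemma has_real_derivative_affine_comp:
  fixes f :: "real \<Rightarrow> real"
  assumes "\<forall>x. f differentiable (at x)"
  shows "((\<lambda>x. f (a + s * x)) has_real_derivative s * deriv f (a + s * x)) (at x)"
proof -
  from assms have "(f has_real_derivative deriv f (a + s * x)) (at (a + s * x))"
    by (auto simp: DERIV_deriv_iff_real_differentiable)
  moreover have "((\<lambda>x. a + s * x) has_real_derivative s) (at x)"
    by (auto intro!: derivative_eq_intros)
  ultimately show ?thesis
    using DERIV_chain2 by (fastforce simp: mult.commute)
qed

lemma smooth_upto_add: "smooth_upto n f \<Longrightarrow> smooth_upto n g \<Longrightarrow> smooth_upto n (\<lambda>x. f x + g x)"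
  by (induction n arbitrary: f g) (auto simp: deriv_add_fun)

lemma smooth_upto_mult: "smooth_upto n f \<Longrightarrow> smooth_upto n g \<Longrightarrow> smooth_upto n (\<lambda>x. f x * g x)"
proof (induction n arbitrary: f g)
  case 0
  then show ?case by auto
next
  case (Suc n)
  have "smooth_upto n (\<lambda>x. deriv f x * g x)" "smooth_upto n (\<lambda>x. f x * deriv g x)"
    using Suc.IH Suc.prems smooth_upto_Suc_imp by auto
  then show ?case
    using Suc.prems by (auto simp: deriv_mult_fun intro: smooth_upto_add)
qed

lemma smooth_upto_const: "smooth_upto n (\<lambda>x. c)"
  by (induction n arbitrary: c) auto

lemma smooth_upto_affine_comp: "smooth_upto n f \<Longrightarrow> smooth_upto n (\<lambda>x. f (a + s * x))"
proof (induction n arbitrary: f)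
  case 0
  then show ?case
    using has_real_derivative_affine_comp[of f a s] real_differentiable_def by auto
next
  case (Suc n)
  have "smooth_upto n (\<lambda>x. s * deriv f (a + s * x))"
    using Suc by (auto intro!: smooth_upto_mult smooth_upto_const)
  moreover have "deriv (\<lambda>x. f (a + s * x)) = (\<lambda>x. s * deriv f (a + s * x))"
    using has_real_derivative_affine_comp[of f a s] Suc.prems DERIV_imp_deriv by fastforce
  ultimately show ?case
    using Suc.prems has_real_derivative_affine_comp[of f a s] real_differentiable_def by auto
qed

lemma has_real_derivative_Re_Im_of_real:
  assumes "(W has_field_derivative W') (at (of_real x))"
  shows "((\<lambda>x. Re (W (of_real x))) has_real_derivative Re W') (at x)"
    and "((\<lambda>x. Im (W (of_real x))) has_real_derivative Im W') (at x)"
proof -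
  have "((\<lambda>x. W (of_real x)) has_vector_derivative W') (at x)"
    using assms by (rule has_vector_derivative_real_field)
  then show "((\<lambda>x. Re (W (of_real x))) has_real_derivative Re W') (at x)"
    and "((\<lambda>x. Im (W (of_real x))) has_real_derivative Im W') (at x)"
    by (auto intro: has_field_derivative_Re has_field_derivative_Im)
qed

lemma smooth_upto_Re_holomorphic:
  assumes "W holomorphic_on UNIV"
  shows "smooth_upto n (\<lambda>x. Re (W (of_real x)))"
  using assms
proof (induction n arbitrary: W)
  case (0 W)
  show ?case
    using has_real_derivative_Re_Im_of_real(1)[OF holomorphic_derivI[OF 0]] real_differentiable_def
    by auto
next
  case (Suc n W)
  have d: "((\<lambda>x. Re (W (of_real x))) has_real_derivative Re (deriv W (of_real x))) (at x)" for x
    using has_real_derivative_Re_Im_of_real(1)[OF holomorphic_derivI[OF Suc.prems]] by auto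
  then have "deriv (\<lambda>x. Re (W (of_real x))) = (\<lambda>x. Re (deriv W (of_real x)))"
    using DERIV_imp_deriv by blast
  moreover have "deriv W holomorphic_on UNIV"
    using Suc.prems by (simp add: holomorphic_deriv)
  ultimately show ?case
    using Suc.IH d real_differentiable_def by auto
qed

lemma smooth_upto_Im_holomorphic:
  assumes "W holomorphic_on UNIV"
  shows "smooth_upto n (\<lambda>x. Im (W (of_real x)))"
proof -
  have "(\<lambda>z. - \<i> * W z) holomorphic_on UNIV"
    using assms by (intro holomorphic_intros)
  then show ?thesis
    using smooth_upto_Re_holomorphic by force
qed

section \<open>A smooth bump function and test functions\<close>

text \<open>The classical flat function: all its derivatives are again of the form \<open>exp_flat Q\<close>.\<close>

definition exp_flat :: "real poly \<Rightarrow> real \<Rightarrow> real" where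
  "exp_flat P t = (if t > 0 then poly P (1 / t) * exp (- 1 / t) else 0)"

definition exp_flat_deriv_poly :: "real poly \<Rightarrow> real poly" where
  "exp_flat_deriv_poly P = [:0, 0, 1:] * (P - pderiv P)"

lemma tendsto_poly_mult_exp_neg_at_top:
  "((\<lambda>s::real. poly p s * exp (- s)) \<longlongrightarrow> 0) at_top"
proof -
  have "poly p s * exp (- s) = (\<Sum>i\<le>degree p. coeff p i * (s ^ i / exp s))" for s
    by (simp add: poly_altdef exp_minus field_simps sum_divide_distrib)
  moreover have "((\<lambda>s. \<Sum>i\<le>degree p. coeff p i * (s ^ i / exp s)) \<longlongrightarrow> 0) at_top"
    by (intro tendsto_null_sum tendsto_mult_right_zero tendsto_power_div_exp_0)
  ultimately show ?thesis
    by simp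
qed

lemma has_real_derivative_exp_flat_0: "(exp_flat P has_real_derivative 0) (at 0)"
proof -
  have "((\<lambda>y. (exp_flat P y - exp_flat P 0) / (y - 0)) \<longlongrightarrow> 0) (at (0::real))"
  proof (rule filterlim_split_at)
    show "((\<lambda>y. (exp_flat P y - exp_flat P 0) / (y - 0)) \<longlongrightarrow> 0) (at_left (0::real))"
      by (rule tendsto_eventually)
        (auto simp: eventually_at_left_field exp_flat_def intro: exI[of _ "-1"])
  next
    have "((\<lambda>s. poly (pCons 0 P) s * exp (- s)) \<longlongrightarrow> 0) at_top"
      by (rule tendsto_poly_mult_exp_neg_at_top)
    then have "((\<lambda>y. poly (pCons 0 P) (inverse y) * exp (- inverse y)) \<longlongrightarrow> 0) (at_right (0::real))"
      by (rule filterlim_compose[OF _ filterlim_inverse_at_top_right])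
    moreover have "\<forall>\<^sub>F y in at_right 0.
        poly (pCons 0 P) (inverse y) * exp (- inverse y) = (exp_flat P y - exp_flat P 0) / (y - 0)"
      by (auto simp: eventually_at_right_field exp_flat_def field_simps intro: exI[of _ 1])
    ultimately show "((\<lambda>y. (exp_flat P y - exp_flat P 0) / (y - 0)) \<longlongrightarrow> 0) (at_right (0::real))"
      by (rule Lim_transform_eventually)
  qed
  then show ?thesis
    by (simp add: has_field_derivative_iff exp_flat_def)
qed

lemma has_real_derivative_exp_flat:
  "(exp_flat P has_real_derivative exp_flat (exp_flat_deriv_poly P) t) (at t)"
proof -
  consider "t > 0" | "t < 0" | "t = 0"
    by linarith
  then show ?thesis
  proof cases
    case 1
    have "((\<lambda>t. poly P (1/t) * exp (-1/t)) has_real_derivative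
        poly (pderiv P) (1/t) * (- 1 / t\<^sup>2) * exp (-1/t) + poly P (1/t) * (exp (-1/t) * (1 / t\<^sup>2))) (at t)"
      using 1 by (auto intro!: derivative_eq_intros DERIV_chain2[where f="poly P"] poly_DERIV
          simp: power2_eq_square field_simps)
    moreover have "poly (pderiv P) (1/t) * (- 1 / t\<^sup>2) * exp (-1/t) + poly P (1/t) * (exp (-1/t) * (1 / t\<^sup>2))
        = exp_flat (exp_flat_deriv_poly P) t"
      using 1 by (simp add: exp_flat_def exp_flat_deriv_poly_def power2_eq_square field_simps)
    ultimately have "((\<lambda>t. poly P (1/t) * exp (-1/t)) has_real_derivative exp_flat (exp_flat_deriv_poly P) t) (at t)"
      by simp
    then show ?thesis
      by (rule has_field_derivative_transform_within_open[where S="{0<..}"])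
        (use 1 in \<open>auto simp: exp_flat_def\<close>)
  next
    case 2
    have "((\<lambda>t. 0) has_real_derivative exp_flat (exp_flat_deriv_poly P) t) (at t)"
      using 2 by (simp add: exp_flat_def)
    then show ?thesis
      by (rule has_field_derivative_transform_within_open[where S="{..<0}"])
        (use 2 in \<open>auto simp: exp_flat_def\<close>)
  next
    case 3
    then show ?thesis
      using has_real_derivative_exp_flat_0 by (simp add: exp_flat_def)
  qed
qed

lemma deriv_exp_flat: "deriv (exp_flat P) = exp_flat (exp_flat_deriv_poly P)"
  using has_real_derivative_exp_flat DERIV_imp_deriv by blast

lemma smooth_upto_exp_flat: "smooth_upto n (exp_flat P)"
  by (induction n arbitrary: P)
    (use has_real_derivative_exp_flat real_differentiable_def in \<open>auto simp: deriv_exp_flat\<close>)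

definition bump :: "real \<Rightarrow> real" where
  "bump x = exp 2 * (exp_flat 1 (1 + x) * exp_flat 1 (1 - x))"

lemma smooth_upto_bump: "smooth_upto n bump"
proof -
  have "smooth_upto n (\<lambda>x. exp_flat 1 (1 + 1 * x))" "smooth_upto n (\<lambda>x. exp_flat 1 (1 + (-1) * x))"
    by (rule smooth_upto_affine_comp[OF smooth_upto_exp_flat])+
  then show ?thesis
    unfolding bump_def by (auto intro!: smooth_upto_mult smooth_upto_const)
qed

lemma bump_0: "bump 0 = 1"
  by (simp add: bump_def exp_flat_def flip: exp_add)

lemma bump_eq_0: "\<bar>x\<bar> \<ge> 1 \<Longrightarrow> bump x = 0"
  by (auto simp: bump_def exp_flat_def)

lemma deriv_bump_eq_0:
  assumes "\<bar>x\<bar> \<ge> 1"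
  shows "deriv bump x = 0"
proof -
  have "(bump has_real_derivative exp 2 * (exp_flat (exp_flat_deriv_poly 1) (1 + x) * exp_flat 1 (1 - x)
      - exp_flat 1 (1 + x) * exp_flat (exp_flat_deriv_poly 1) (1 - x))) (at x)"
    unfolding bump_def[abs_def]
    by (auto intro!: derivative_eq_intros DERIV_chain2[OF has_real_derivative_exp_flat])
  then have "deriv bump x = exp 2 * (exp_flat (exp_flat_deriv_poly 1) (1 + x) * exp_flat 1 (1 - x)
      - exp_flat 1 (1 + x) * exp_flat (exp_flat_deriv_poly 1) (1 - x))"
    by (rule DERIV_imp_deriv)
  then show ?thesis
    using assms by (auto simp: exp_flat_def)
qed

lemma continuous_on_bump: "continuous_on UNIV bump" "continuous_on UNIV (deriv bump)"
  using smooth_upto_bump[of 1]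
  by (auto intro!: continuous_at_imp_continuous_on differentiable_imp_continuous_within)

lemma bounded_if_vanishing_outside_unit_interval:
  fixes h :: "real \<Rightarrow> real"
  assumes "continuous_on UNIV h" "\<And>x. \<bar>x\<bar> \<ge> 1 \<Longrightarrow> h x = 0"
  shows "\<exists>M. \<forall>x. \<bar>h x\<bar> \<le> M"
proof -
  have "compact (h ` {-1..1})"
    by (rule compact_continuous_image) (auto intro: continuous_on_subset[OF assms(1)])
  from compact_imp_bounded[OF this] obtain M where M: "\<forall>y\<in>h ` {-1..1}. norm y \<le> M"
    unfolding bounded_iff by blast
  have "\<bar>h x\<bar> \<le> max M 0" for x
  proof (cases "\<bar>x\<bar> \<ge> 1")
    case True
    then show ?thesis
      using assms(2) by simp
  next
    case False
    then have "x \<in> {-1..1}"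
      by auto
    then have "norm (h x) \<le> M"
      using M by blast
    then show ?thesis
      by simp
  qed
  then show ?thesis
    by blast
qed

lemma bump_bounded: obtains M where "\<And>x. \<bar>bump x\<bar> \<le> M" "\<And>x. \<bar>deriv bump x\<bar> \<le> M"
proof -
  obtain M1 where "\<forall>x. \<bar>bump x\<bar> \<le> M1"
    using bounded_if_vanishing_outside_unit_interval[OF continuous_on_bump(1) bump_eq_0] by blast
  moreover obtain M2 where "\<forall>x. \<bar>deriv bump x\<bar> \<le> M2"
    using bounded_if_vanishing_outside_unit_interval[OF continuous_on_bump(2) deriv_bump_eq_0] by blast
  ultimately show ?thesis
    using that[of "max M1 M2"] by (meson max.coboundedI1 max.coboundedI2 order.trans)
qed

lemma bump_cutoff_bounded:
  obtains M where "M \<ge> 0"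
    "\<And>R x (w::complex). R \<ge> 1 \<Longrightarrow> cmod (w * of_real (bump (x / R))) \<le> M * cmod w"
    "\<And>R x (w::complex) w'. R \<ge> 1 \<Longrightarrow>
       cmod (w' * of_real (bump (x / R)) + w * of_real (deriv bump (x / R) / R)) \<le> M * (cmod w + cmod w')"
proof -
  obtain M where M: "\<And>x. \<bar>bump x\<bar> \<le> M" "\<And>x. \<bar>deriv bump x\<bar> \<le> M"
    using bump_bounded by blast
  show ?thesis
  proof (rule that[of M])
    show "M \<ge> 0"
      using M(1)[of 0] by simp
    fix R x :: real and w w' :: complex
    assume R: "R \<ge> 1"
    show "cmod (w * of_real (bump (x / R))) \<le> M * cmod w"
      using mult_left_mono[OF M(1)[of "x / R"] norm_ge_zero[of w]] by (simp add: norm_mult mult.commute)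
    have "\<bar>deriv bump (x / R)\<bar> / R \<le> \<bar>deriv bump (x / R)\<bar>"
      using R by (simp add: divide_le_eq mult_le_cancel_left1)
    then have "\<bar>deriv bump (x / R) / R\<bar> \<le> M"
      using M(2)[of "x / R"] R by (simp add: abs_divide)
    then have "cmod (w' * of_real (bump (x / R))) + cmod (w * of_real (deriv bump (x / R) / R))
        \<le> cmod w' * M + cmod w * M"
      unfolding norm_mult norm_of_real by (intro add_mono mult_left_mono M(1)) auto
    then have "cmod (w' * of_real (bump (x / R)) + w * of_real (deriv bump (x / R) / R))
        \<le> cmod w' * M + cmod w * M"
      by (rule order_trans[OF norm_triangle_ineq])
    then show "cmod (w' * of_real (bump (x / R)) + w * of_real (deriv bump (x / R) / R)) \<le> M * (cmod w + cmod w')"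
      by (simp add: algebra_simps)
  qed
qed

lemma continuous_on_bump_rescaled:
  assumes "R \<noteq> 0"
  shows "continuous_on UNIV (\<lambda>x. bump (x / R))" "continuous_on UNIV (\<lambda>x. deriv bump (x / R))"
proof -
  have "continuous_on UNIV (\<lambda>x. x / R)"
    using assms by (intro continuous_intros) auto
  then show "continuous_on UNIV (\<lambda>x. bump (x / R))" "continuous_on UNIV (\<lambda>x. deriv bump (x / R))"
    by (auto intro: continuous_on_compose2[OF continuous_on_bump(1)]
        continuous_on_compose2[OF continuous_on_bump(2)])
qed

lemma tendsto_bump_rescaled:
  "(\<lambda>k. bump (x / real (Suc k))) \<longlonglongrightarrow> 1"
  "(\<lambda>k. deriv bump (x / real (Suc k)) / real (Suc k)) \<longlonglongrightarrow> 0"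
proof -
  have inv: "(\<lambda>k. y / real (Suc k)) \<longlonglongrightarrow> 0" for y
    using LIMSEQ_Suc[OF lim_const_over_n[of y]] by simp
  have "isCont bump 0"
    using continuous_on_bump(1) by (simp add: continuous_on_eq_continuous_at)
  from isCont_tendsto_compose[OF this inv[of x]] show "(\<lambda>k. bump (x / real (Suc k))) \<longlonglongrightarrow> 1"
    by (simp add: bump_0)
  obtain M where M: "\<And>x. \<bar>deriv bump x\<bar> \<le> M"
    using bump_bounded by blast
  have "norm (deriv bump (x / real (Suc k)) / real (Suc k)) \<le> M / real (Suc k)" for k
    using M[of "x / real (Suc k)"] by (simp add: divide_right_mono)
  then show "(\<lambda>k. deriv bump (x / real (Suc k)) / real (Suc k)) \<longlonglongrightarrow> 0"
    by (intro Lim_null_comparison[OF always_eventually inv[of M]]) simp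
qed

lemma test_function_mult_bump:
  assumes "\<And>n. smooth_upto n u" "R > 0"
  shows "test_function (\<lambda>x. u x * bump (x / R))"
proof -
  have "smooth_upto n (\<lambda>x. u x * bump (0 + (1 / R) * x))" for n
    using assms(1) by (intro smooth_upto_mult smooth_upto_affine_comp smooth_upto_bump)
  then have "\<forall>n x. (deriv ^^ n) (\<lambda>x. u x * bump (x / R)) differentiable (at x)"
    by (auto simp: smooth_upto_iff)
  moreover have "\<forall>x. R < \<bar>x\<bar> \<longrightarrow> u x * bump (x / R) = 0"
    using assms(2) by (auto intro!: bump_eq_0 simp: abs_divide field_simps)
  ultimately show ?thesis
    unfolding test_function_def by blast
qed

lemma deriv_mult_bump:
  assumes "\<forall>x. u differentiable (at x)" "R > 0"
  shows "deriv (\<lambda>x. u x * bump (x / R)) x = deriv u x * bump (x / R) + u x * (deriv bump (x / R) / R)"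
proof -
  have du: "(u has_real_derivative deriv u x) (at x)"
    using assms(1) DERIV_deriv_iff_real_differentiable by blast
  have "(bump has_real_derivative deriv bump (x / R)) (at (x / R))"
    using smooth_upto_bump[of 0] DERIV_deriv_iff_real_differentiable by auto
  then have "((\<lambda>x. bump (x / R)) has_real_derivative deriv bump (x / R) * (1 / R)) (at x)"
    by (rule DERIV_chain2) (use assms(2) in \<open>auto intro!: derivative_eq_intros\<close>)
  from DERIV_mult[OF du this] show ?thesis
    by (intro DERIV_imp_deriv) (simp add: algebra_simps)
qed

lemma test_function_deriv:
  assumes "test_function \<phi>"
  shows "test_function (deriv \<phi>)"
proof -
  from assms obtain R where R: "\<forall>x. R < \<bar>x\<bar> \<longrightarrow> \<phi> x = 0"
    and d: "\<forall>n x. (deriv ^^ n) \<phi> differentiable (at x)"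
    unfolding test_function_def by blast
  have "deriv \<phi> x = 0" if x: "R < \<bar>x\<bar>" for x
  proof -
    have "((\<lambda>x. 0) has_real_derivative 0) (at x)"
      by simp
    then have "(\<phi> has_real_derivative 0) (at x)"
    proof (rule has_field_derivative_transform_within_open[where S="{x. R < \<bar>x\<bar>}"])
      show "open {x::real. R < \<bar>x\<bar>}"
        by (intro open_Collect_less continuous_intros)
    qed (use x R in auto)
    then show ?thesis
      by (rule DERIV_imp_deriv)
  qed
  moreover have "\<forall>n x. (deriv ^^ n) (deriv \<phi>) differentiable (at x)"
    using d by (metis deriv_funpow_Suc)
  ultimately show ?thesis
    unfolding test_function_def by blast
qed

lemma test_function_continuous:
  assumes "test_function \<phi>"
  shows "continuous_on UNIV \<phi>" "continuous_on UNIV (deriv \<phi>)"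
proof -
  have "\<forall>x. (deriv ^^ n) \<phi> differentiable (at x)" for n
    using assms unfolding test_function_def by blast
  from this[of 0] this[of 1] show "continuous_on UNIV \<phi>" "continuous_on UNIV (deriv \<phi>)"
    by (auto intro!: continuous_at_imp_continuous_on differentiable_imp_continuous_within)
qed

section \<open>Exponentially decaying functions and weak derivatives\<close>

definition exp_decaying :: "real \<Rightarrow> (real \<Rightarrow> complex) \<Rightarrow> bool" where
  "exp_decaying b G \<longleftrightarrow> G \<in> borel_measurable lborel \<and>
     (\<forall>n c. c < b \<longrightarrow> integrable lborel (\<lambda>x. (1 + \<bar>x\<bar>) ^ n * exp (c * \<bar>x\<bar>) * cmod (G x)))"

definition exp_weighted_norm :: "(real \<Rightarrow> complex) \<Rightarrow> nat \<Rightarrow> real \<Rightarrow> real" where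
  "exp_weighted_norm G n c = (LINT x|lborel. (1 + \<bar>x\<bar>) ^ n * exp (c * \<bar>x\<bar>) * cmod (G x))"

definition has_weak_deriv :: "(real \<Rightarrow> complex) \<Rightarrow> (real \<Rightarrow> complex) \<Rightarrow> bool" where
  "has_weak_deriv a g \<longleftrightarrow> (\<forall>\<phi>. test_function \<phi> \<longrightarrow>
     (LINT x|lborel. a x * of_real (deriv \<phi> x)) = - (LINT x|lborel. g x * of_real (\<phi> x)))"

lemma exp_weighted_norm_nonneg: "0 \<le> exp_weighted_norm G n c"
  unfolding exp_weighted_norm_def by (intro integral_nonneg_AE) auto

lemma power_le_fact_mult_exp:
  assumes "(t::real) \<ge> 0" "e > 0"
  shows "t ^ n \<le> fact n / e ^ n * exp (e * t)"
proof -
  have "(e * t) ^ n / fact n = (\<Sum>k\<in>{n}. (e * t) ^ k /\<^sub>R fact k)"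
    by (simp add: divide_inverse mult.commute)
  also have "\<dots> \<le> (\<Sum>k. (e * t) ^ k /\<^sub>R fact k)"
    by (rule sum_le_suminf[OF summable_exp_generic]) (use assms in auto)
  also have "\<dots> = exp (e * t)"
    by (simp add: exp_def)
  finally show ?thesis
    using assms by (simp add: power_mult_distrib field_simps)
qed

lemma integrable_exp_neg_abs:
  assumes "a > 0"
  shows "integrable lborel (\<lambda>x::real. exp (- a * \<bar>x\<bar>))"
proof -
  have "(\<lambda>x::real. exp (-a*x)) absolutely_integrable_on {0..}"
    using integrable_on_exp_minus_to_infinity[OF assms, of 0]
    by (rule nonnegative_absolutely_integrable_1) simp
  then have pos: "integrable lborel (\<lambda>x::real. indicator {0..} x *\<^sub>R exp (-a*x))"
    by (simp add: set_integrable_def integrable_completion)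
  have neg: "integrable lborel (\<lambda>x::real. indicator {0..} (0 + (-1) * x) *\<^sub>R exp (-a*(0 + (-1) * x)))"
    by (rule lborel_integrable_real_affine[OF pos]) simp
  show ?thesis
    by (rule Bochner_Integration.integrable_bound[OF Bochner_Integration.integrable_add[OF pos neg]])
      (auto simp: indicator_def)
qed

text \<open>The weighted \<open>L\<^sup>2\<close> bound of \<open>X_space\<close> yields weighted \<open>L\<^sup>1\<close> bounds for every
  smaller rate \<open>c = b - 2 e\<close>: with \<open>u = exp (b |x|) |G x|\<close> and \<open>v = exp (- e |x|)\<close>,
  \<open>u v \<le> u\<^sup>2 + v\<^sup>2\<close>.\<close>

lemma exp_decayingI:
  assumes meas: "G \<in> borel_measurable lborel"
    and int: "integrable lborel (\<lambda>x. (exp (b * \<bar>x\<bar>) * cmod (G x))\<^sup>2)"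
  shows "exp_decaying b G"
  unfolding exp_decaying_def
proof (intro conjI allI impI meas)
  fix n and c :: real
  assume "c < b"
  define e where "e = (b - c) / 2"
  have e: "e > 0"
    using \<open>c < b\<close> by (simp add: e_def)
  define K where "K = fact n / e ^ n * exp e"
  have "integrable lborel (\<lambda>x. K * ((exp (b * \<bar>x\<bar>) * cmod (G x))\<^sup>2 + exp (- (2 * e) * \<bar>x\<bar>)))"
    using int integrable_exp_neg_abs[of "2 * e"] e by auto
  then show "integrable lborel (\<lambda>x. (1 + \<bar>x\<bar>) ^ n * exp (c * \<bar>x\<bar>) * cmod (G x))"
  proof (rule Bochner_Integration.integrable_bound)
    show "(\<lambda>x. (1 + \<bar>x\<bar>) ^ n * exp (c * \<bar>x\<bar>) * cmod (G x)) \<in> borel_measurable lborel"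
      using meas by measurable
    show "AE x in lborel. norm ((1 + \<bar>x\<bar>) ^ n * exp (c * \<bar>x\<bar>) * cmod (G x))
       \<le> norm (K * ((exp (b * \<bar>x\<bar>) * cmod (G x))\<^sup>2 + exp (- (2 * e) * \<bar>x\<bar>)))"
    proof (rule AE_I2)
      fix x :: real
      define u where "u = exp (b * \<bar>x\<bar>) * cmod (G x)"
      define v where "v = exp (- e * \<bar>x\<bar>)"
      have "(1 + \<bar>x\<bar>) ^ n \<le> fact n / e ^ n * exp (e * (1 + \<bar>x\<bar>))"
        by (rule power_le_fact_mult_exp) (use e in auto)
      then have "(1 + \<bar>x\<bar>) ^ n * exp (c * \<bar>x\<bar>) * cmod (G x) \<le>
          fact n / e ^ n * exp (e * (1 + \<bar>x\<bar>)) * exp (c * \<bar>x\<bar>) * cmod (G x)"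
        by (intro mult_right_mono) auto
      also have "\<dots> = K * (u * v)"
        by (simp add: K_def e_def u_def v_def algebra_simps flip: exp_add) (simp add: field_simps)
      also have "\<dots> \<le> K * (u\<^sup>2 + v\<^sup>2)"
      proof (rule mult_left_mono)
        have "0 \<le> (u - v)\<^sup>2" "0 \<le> u * v"
          by (auto simp: u_def v_def)
        then show "u * v \<le> u\<^sup>2 + v\<^sup>2"
          by (simp add: power2_diff)
      qed (use e in \<open>simp add: K_def\<close>)
      also have "v\<^sup>2 = exp (- (2 * e) * \<bar>x\<bar>)"
        by (simp add: v_def power2_eq_square flip: exp_add)
      finally show "norm ((1 + \<bar>x\<bar>) ^ n * exp (c * \<bar>x\<bar>) * cmod (G x))
          \<le> norm (K * ((exp (b * \<bar>x\<bar>) * cmod (G x))\<^sup>2 + exp (- (2 * e) * \<bar>x\<bar>)))"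
        using e by (simp add: K_def u_def)
    qed
  qed
qed

lemma exp_decaying_weighted_integrable:
  "exp_decaying b G \<Longrightarrow> c < b \<Longrightarrow> integrable lborel (\<lambda>x. (1 + \<bar>x\<bar>) ^ n * exp (c * \<bar>x\<bar>) * cmod (G x))"
  unfolding exp_decaying_def by blast

lemma exp_decaying_measurable: "exp_decaying b G \<Longrightarrow> G \<in> borel_measurable borel"
  unfolding exp_decaying_def by simp

lemma integrable_mult_exp_decaying:
  assumes "exp_decaying b G" "c < b" "continuous_on UNIV h"
    and "\<And>x. cmod (h x) \<le> K * (1 + \<bar>x\<bar>) ^ n * exp (c * \<bar>x\<bar>)"
  shows "integrable lborel (\<lambda>x. G x * h x)"
proof -
  have "integrable lborel (\<lambda>x. K * ((1 + \<bar>x\<bar>) ^ n * exp (c * \<bar>x\<bar>) * cmod (G x)))"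
    using exp_decaying_weighted_integrable[OF assms(1,2)] by auto
  then show ?thesis
  proof (rule Bochner_Integration.integrable_bound)
    show "(\<lambda>x. G x * h x) \<in> borel_measurable lborel"
      using exp_decaying_measurable[OF assms(1)] borel_measurable_continuous_onI[OF assms(3)] by simp
    show "AE x in lborel. norm (G x * h x) \<le> norm (K * ((1 + \<bar>x\<bar>) ^ n * exp (c * \<bar>x\<bar>) * cmod (G x)))"
    proof (rule AE_I2)
      fix x
      have "norm (G x * h x) \<le> cmod (G x) * (K * (1 + \<bar>x\<bar>) ^ n * exp (c * \<bar>x\<bar>))"
        unfolding norm_mult by (intro mult_left_mono assms(4)) simp
      then show "norm (G x * h x) \<le> norm (K * ((1 + \<bar>x\<bar>) ^ n * exp (c * \<bar>x\<bar>) * cmod (G x)))"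
        by (simp add: mult_ac)
    qed
  qed
qed

lemma tendsto_integral_mult_exp_decaying:
  assumes G: "exp_decaying b G" "c < b"
    and cont: "\<And>k. continuous_on UNIV (h k)" "continuous_on UNIV g"
    and bound: "\<And>k x. cmod (h k x) \<le> K * (1 + \<bar>x\<bar>) ^ n * exp (c * \<bar>x\<bar>)"
    and lim: "\<And>x. (\<lambda>k. h k x) \<longlonglongrightarrow> g x"
  shows "(\<lambda>k. LINT x|lborel. G x * h k x) \<longlonglongrightarrow> (LINT x|lborel. G x * g x)"
proof (rule integral_dominated_convergence)
  show "(\<lambda>x. G x * g x) \<in> borel_measurable lborel"
    using exp_decaying_measurable[OF G(1)] borel_measurable_continuous_onI[OF cont(2)] by simp
  show "(\<lambda>x. G x * h k x) \<in> borel_measurable lborel" for k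
    using exp_decaying_measurable[OF G(1)] borel_measurable_continuous_onI[OF cont(1)] by simp
  show "integrable lborel (\<lambda>x. K * ((1 + \<bar>x\<bar>) ^ n * exp (c * \<bar>x\<bar>) * cmod (G x)))"
    using exp_decaying_weighted_integrable[OF G] by auto
  show "AE x in lborel. (\<lambda>k. G x * h k x) \<longlonglongrightarrow> G x * g x"
    by (intro AE_I2 tendsto_mult tendsto_const lim)
  show "AE x in lborel. norm (G x * h k x) \<le> K * ((1 + \<bar>x\<bar>) ^ n * exp (c * \<bar>x\<bar>) * cmod (G x))" for k
  proof (rule AE_I2)
    fix x
    have "norm (G x * h k x) \<le> cmod (G x) * (K * (1 + \<bar>x\<bar>) ^ n * exp (c * \<bar>x\<bar>))"
      unfolding norm_mult by (intro mult_left_mono bound) simp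
    then show "norm (G x * h k x) \<le> K * ((1 + \<bar>x\<bar>) ^ n * exp (c * \<bar>x\<bar>) * cmod (G x))"
      by (simp add: mult_ac)
  qed
qed

lemma X_space_weak_derivs:
  assumes "X_space b s \<psi>" "2 \<le> s"
  obtains g\<^sub>1 g\<^sub>2 where "exp_decaying b \<psi>" "exp_decaying b g\<^sub>1" "exp_decaying b g\<^sub>2"
    "has_weak_deriv \<psi> g\<^sub>1" "has_weak_deriv g\<^sub>1 g\<^sub>2"
proof -
  from assms(1) obtain g where g0: "g 0 = \<psi>" and g: "\<And>\<alpha>. \<alpha> \<le> s \<Longrightarrow>
          g \<alpha> \<in> borel_measurable lborel \<and>
          (\<forall>\<beta>\<le>s. integrable lborel (\<lambda>x. (exp (b * \<bar>x\<bar>) * \<bar>x\<bar> ^ \<beta> * cmod (g \<alpha> x))\<^sup>2)) \<and>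
          (\<forall>\<phi>. test_function \<phi> \<longrightarrow>
             (LINT x|lborel. \<psi> x * of_real ((deriv ^^ \<alpha>) \<phi> x))
               = (-1) ^ \<alpha> * (LINT x|lborel. g \<alpha> x * of_real (\<phi> x)))"
    unfolding X_space_def by blast
  have decaying: "exp_decaying b (g \<alpha>)" if "\<alpha> \<le> s" for \<alpha>
    using g[OF that] by (intro exp_decayingI) (auto dest: spec[of _ 0])
  have ibp: "(LINT x|lborel. \<psi> x * of_real ((deriv ^^ \<alpha>) \<phi> x))
      = (-1) ^ \<alpha> * (LINT x|lborel. g \<alpha> x * of_real (\<phi> x))"
    if "\<alpha> \<le> s" "test_function \<phi>" for \<alpha> \<phi>
    using g that by blast
  have "has_weak_deriv \<psi> (g 1)"
    unfolding has_weak_deriv_def using ibp[of 1] assms(2) by simp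
  moreover have "has_weak_deriv (g 1) (g 2)"
    unfolding has_weak_deriv_def
  proof (intro allI impI)
    fix \<phi> assume \<phi>: "test_function \<phi>"
    have "(LINT x|lborel. \<psi> x * of_real (deriv (deriv \<phi>) x)) = - (LINT x|lborel. g 1 x * of_real (deriv \<phi> x))"
      using ibp[of 1 "deriv \<phi>"] test_function_deriv[OF \<phi>] assms(2) by simp
    moreover have "(LINT x|lborel. \<psi> x * of_real (deriv (deriv \<phi>) x)) = (LINT x|lborel. g 2 x * of_real (\<phi> x))"
      using ibp[of 2 \<phi>] \<phi> assms(2) by (simp add: numeral_2_eq_2)
    ultimately show "(LINT x|lborel. g 1 x * of_real (deriv \<phi> x)) = - (LINT x|lborel. g 2 x * of_real (\<phi> x))"
      by (simp add: minus_equation_iff)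
  qed
  ultimately show ?thesis
    using that decaying[of 0] decaying[of 1] decaying[of 2] assms(2) g0 by simp
qed

lemma integral_mult_Re_Im:
  fixes a f :: "real \<Rightarrow> complex"
  assumes int: "integrable lborel (\<lambda>x. a x * f x)"
    and meas: "a \<in> borel_measurable borel" "f \<in> borel_measurable borel"
  shows "(LINT x|lborel. a x * f x)
    = (LINT x|lborel. a x * of_real (Re (f x))) + \<i> * (LINT x|lborel. a x * of_real (Im (f x)))"
proof -
  have "integrable lborel (\<lambda>x. a x * of_real (Re (f x)))" "integrable lborel (\<lambda>x. a x * of_real (Im (f x)))"
    by (intro Bochner_Integration.integrable_bound[OF int] AE_I2,
        use meas in measurable, simp add: norm_mult mult_left_mono abs_Re_le_cmod abs_Im_le_cmod)+
  moreover have "a x * f x = a x * of_real (Re (f x)) + \<i> * (a x * of_real (Im (f x)))" for x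
    by (simp add: algebra_simps complex_eq_iff)
  ultimately show ?thesis
    by simp
qed

lemma has_weak_deriv_complex_test:
  assumes weak: "has_weak_deriv a g"
    and meas: "a \<in> borel_measurable borel" "g \<in> borel_measurable borel"
    and test: "test_function (\<lambda>x. Re (\<phi> x))" "test_function (\<lambda>x. Im (\<phi> x))"
    and deriv: "\<And>x. Re (\<phi>' x) = deriv (\<lambda>x. Re (\<phi> x)) x" "\<And>x. Im (\<phi>' x) = deriv (\<lambda>x. Im (\<phi> x)) x"
    and int: "integrable lborel (\<lambda>x. a x * \<phi>' x)" "integrable lborel (\<lambda>x. g x * \<phi> x)"
  shows "(LINT x|lborel. a x * \<phi>' x) = - (LINT x|lborel. g x * \<phi> x)"
proof -
  have "\<phi> \<in> borel_measurable borel" "\<phi>' \<in> borel_measurable borel"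
    using test_function_continuous[OF test(1)] test_function_continuous[OF test(2)]
    by (auto simp: borel_measurable_complex_iff deriv[abs_def] intro: borel_measurable_continuous_onI)
  moreover have "(LINT x|lborel. a x * of_real (Re (\<phi>' x))) = - (LINT x|lborel. g x * of_real (Re (\<phi> x)))"
    "(LINT x|lborel. a x * of_real (Im (\<phi>' x))) = - (LINT x|lborel. g x * of_real (Im (\<phi> x)))"
    using weak test unfolding has_weak_deriv_def deriv by blast+
  ultimately show ?thesis
    by (simp add: integral_mult_Re_Im[OF int(1) meas(1)] integral_mult_Re_Im[OF int(2) meas(2)])
qed

lemma has_weak_deriv_mult_bump:
  fixes W W' :: "complex \<Rightarrow> complex"
  assumes weak: "has_weak_deriv a g"
    and meas: "a \<in> borel_measurable borel" "g \<in> borel_measurable borel"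
    and W: "\<And>w. (W has_field_derivative W' w) (at w)"
    and R: "R > 0"
    and int: "integrable lborel (\<lambda>x. a x *
          (W' (of_real x) * of_real (bump (x / R)) + W (of_real x) * of_real (deriv bump (x / R) / R)))"
      "integrable lborel (\<lambda>x. g x * (W (of_real x) * of_real (bump (x / R))))"
  shows "(LINT x|lborel. a x *
      (W' (of_real x) * of_real (bump (x / R)) + W (of_real x) * of_real (deriv bump (x / R) / R)))
    = - (LINT x|lborel. g x * (W (of_real x) * of_real (bump (x / R))))"
proof (rule has_weak_deriv_complex_test[OF weak meas _ _ _ _ int])
  have holo: "W holomorphic_on UNIV"
    using W holomorphic_on_def field_differentiable_def by blast
  have "((\<lambda>x. Re (W (of_real x))) has_real_derivative Re (W' (of_real x))) (at x)"
    "((\<lambda>x. Im (W (of_real x))) has_real_derivative Im (W' (of_real x))) (at x)" for x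
    using has_real_derivative_Re_Im_of_real[OF W] by auto
  then have dRe: "deriv (\<lambda>x. Re (W (of_real x))) x = Re (W' (of_real x))"
    and dIm: "deriv (\<lambda>x. Im (W (of_real x))) x = Im (W' (of_real x))" for x
    by (auto intro: DERIV_imp_deriv)
  have "test_function (\<lambda>x. Re (W (of_real x)) * bump (x / R))"
    "test_function (\<lambda>x. Im (W (of_real x)) * bump (x / R))"
    using smooth_upto_Re_holomorphic[OF holo] smooth_upto_Im_holomorphic[OF holo] R
    by (auto intro: test_function_mult_bump)
  then show "test_function (\<lambda>x. Re (W (of_real x) * of_real (bump (x / R))))"
    "test_function (\<lambda>x. Im (W (of_real x) * of_real (bump (x / R))))"
    by simp_all
  show "Re (W' (of_real x) * of_real (bump (x / R)) + W (of_real x) * of_real (deriv bump (x / R) / R))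
      = deriv (\<lambda>x. Re (W (of_real x) * of_real (bump (x / R)))) x"
    "Im (W' (of_real x) * of_real (bump (x / R)) + W (of_real x) * of_real (deriv bump (x / R) / R))
      = deriv (\<lambda>x. Im (W (of_real x) * of_real (bump (x / R)))) x" for x
    using deriv_mult_bump[OF _ R, of "\<lambda>x. Re (W (of_real x))" x]
      deriv_mult_bump[OF _ R, of "\<lambda>x. Im (W (of_real x))" x]
      smooth_upto_imp_differentiable[OF smooth_upto_Re_holomorphic[OF holo, of 0]]
      smooth_upto_imp_differentiable[OF smooth_upto_Im_holomorphic[OF holo, of 0]]
    by (simp_all add: dRe dIm)
qed


section \<open>The Fourier--Laplace transform of an exponentially decaying function\<close>

text \<open>For real \<open>z\<close>, \<open>fourier_moment G j z\<close> is \<open>\<surd>(2\<pi>) \<i>\<^sup>j\<close> times the \<open>j\<close>-th derivative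
  of the Fourier transform of \<open>G\<close> (see \<open>cderiv_fourier\<close>).\<close>

definition exp_kernel :: "nat \<Rightarrow> complex \<Rightarrow> complex \<Rightarrow> complex" where
  "exp_kernel j z w = w ^ j * exp (- (\<i> * z * w))"

definition fourier_moment :: "(real \<Rightarrow> complex) \<Rightarrow> nat \<Rightarrow> complex \<Rightarrow> complex" where
  "fourier_moment G j z = (LINT x|lborel. G x * exp_kernel j z (of_real x))"

lemma has_field_derivative_exp_kernel:
  "(exp_kernel j z has_field_derivative
      of_nat j * exp_kernel (j - 1) z w - \<i> * z * exp_kernel j z w) (at w)"
  unfolding exp_kernel_def[abs_def]
  by (auto intro!: derivative_eq_intros simp: algebra_simps)

lemma continuous_on_exp_kernel: "continuous_on UNIV (\<lambda>x::real. exp_kernel j z (of_real x))"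
  unfolding exp_kernel_def by (intro continuous_intros)

lemma norm_exp_kernel_le:
  assumes "\<bar>Im z\<bar> \<le> c"
  shows "cmod (exp_kernel j z (of_real x)) \<le> (1 + \<bar>x\<bar>) ^ j * exp (c * \<bar>x\<bar>)"
proof -
  have "Im z * x \<le> \<bar>Im z\<bar> * \<bar>x\<bar>"
    by (metis abs_ge_self abs_mult)
  also have "\<dots> \<le> c * \<bar>x\<bar>"
    using assms by (intro mult_right_mono) auto
  finally have "exp (Im z * x) \<le> exp (c * \<bar>x\<bar>)"
    by simp
  moreover have "\<bar>x\<bar> ^ j \<le> (1 + \<bar>x\<bar>) ^ j"
    by (intro power_mono) auto
  ultimately show ?thesis
    by (simp add: exp_kernel_def norm_mult norm_power mult_mono)
qed

lemma norm_exp_kernel_deriv_le: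
  assumes "\<bar>Im z\<bar> \<le> c"
  shows "cmod (of_nat j * exp_kernel (j - 1) z (of_real x) - \<i> * z * exp_kernel j z (of_real x))
    \<le> (j + cmod z) * (1 + \<bar>x\<bar>) ^ j * exp (c * \<bar>x\<bar>)"
proof -
  have "(1 + \<bar>x\<bar>) ^ (j - 1) \<le> (1 + \<bar>x\<bar>) ^ j"
    by (intro power_increasing) auto
  then have "cmod (exp_kernel (j - 1) z (of_real x)) \<le> (1 + \<bar>x\<bar>) ^ j * exp (c * \<bar>x\<bar>)"
    using norm_exp_kernel_le[OF assms, of "j - 1" x] by (meson exp_ge_zero mult_right_mono order_trans)
  then have "cmod (of_nat j * exp_kernel (j - 1) z (of_real x)) \<le> j * ((1 + \<bar>x\<bar>) ^ j * exp (c * \<bar>x\<bar>))"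
    by (simp add: norm_mult mult_left_mono)
  moreover have "cmod (\<i> * z * exp_kernel j z (of_real x)) \<le> cmod z * ((1 + \<bar>x\<bar>) ^ j * exp (c * \<bar>x\<bar>))"
    using norm_exp_kernel_le[OF assms] by (simp add: norm_mult mult_left_mono)
  ultimately show ?thesis
    by (rule order_trans[OF norm_triangle_ineq4 add_mono[THEN order_trans]]) (simp add: algebra_simps)
qed

lemma integrable_exp_kernel:
  assumes "exp_decaying b G" "\<bar>Im z\<bar> \<le> c" "c < b"
  shows "integrable lborel (\<lambda>x. G x * exp_kernel j z (of_real x))"
  using norm_exp_kernel_le[OF assms(2)]
  by (intro integrable_mult_exp_decaying[OF assms(1,3) continuous_on_exp_kernel, where K=1 and n=j]) simp

lemma norm_fourier_moment_le:
  assumes "exp_decaying b G" "\<bar>Im z\<bar> \<le> c" "c < b" "j \<le> n"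
  shows "cmod (fourier_moment G j z) \<le> exp_weighted_norm G n c"
  unfolding fourier_moment_def exp_weighted_norm_def
proof (rule Bochner_Integration.integral_norm_bound_integral[OF integrable_exp_kernel[OF assms(1-3)]])
  show "integrable lborel (\<lambda>x. (1 + \<bar>x\<bar>) ^ n * exp (c * \<bar>x\<bar>) * cmod (G x))"
    using exp_decaying_weighted_integrable[OF assms(1,3)] .
  fix x
  have "cmod (exp_kernel j z (of_real x)) \<le> (1 + \<bar>x\<bar>) ^ n * exp (c * \<bar>x\<bar>)"
    using norm_exp_kernel_le[OF assms(2), of j x] power_increasing[OF assms(4), of "1 + \<bar>x\<bar>"]
    by (meson abs_ge_zero exp_ge_zero le_add_same_cancel1 mult_right_mono order_trans)
  then show "norm (G x * exp_kernel j z (of_real x)) \<le> (1 + \<bar>x\<bar>) ^ n * exp (c * \<bar>x\<bar>) * cmod (G x)"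
    by (simp add: norm_mult mult_left_mono mult_ac)
qed

text \<open>Integration by parts against an entire function of exponential type, justified by
  cutting it off with \<open>bump (x / R)\<close> and letting \<open>R \<rightarrow> \<infinity>\<close> by dominated convergence.\<close>

lemma has_weak_deriv_entire:
  fixes W W' :: "complex \<Rightarrow> complex"
  assumes a: "exp_decaying b a" and g: "exp_decaying b g" and weak: "has_weak_deriv a g"
    and W: "\<And>w. (W has_field_derivative W' w) (at w)" and c: "c < b"
    and bound: "\<And>x. cmod (W (of_real x)) \<le> K * (1 + \<bar>x\<bar>) ^ n * exp (c * \<bar>x\<bar>)"
      "\<And>x. cmod (W' (of_real x)) \<le> K' * (1 + \<bar>x\<bar>) ^ n * exp (c * \<bar>x\<bar>)"
  shows "(LINT x|lborel. a x * W' (of_real x)) = - (LINT x|lborel. g x * W (of_real x))"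
proof -
  have "W' = deriv W"
  proof
    show "W' w = deriv W w" for w
      using DERIV_imp_deriv[OF W] by simp
  qed
  moreover have holo: "W holomorphic_on UNIV"
    using W unfolding holomorphic_on_def field_differentiable_def by blast
  ultimately have "W' holomorphic_on UNIV"
    by (simp add: holomorphic_deriv)
  then have contW: "continuous_on UNIV (\<lambda>x. W (of_real x))" "continuous_on UNIV (\<lambda>x. W' (of_real x))"
    using holo by (auto intro: continuous_on_compose2[OF holomorphic_on_imp_continuous_on] continuous_on_of_real)
  obtain M where M: "M \<ge> 0"
    "\<And>R x (w::complex). R \<ge> 1 \<Longrightarrow> cmod (w * of_real (bump (x / R))) \<le> M * cmod w"
    "\<And>R x (w::complex) w'. R \<ge> 1 \<Longrightarrow>
       cmod (w' * of_real (bump (x / R)) + w * of_real (deriv bump (x / R) / R)) \<le> M * (cmod w + cmod w')"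
    using bump_cutoff_bounded by blast
  define \<phi> where "\<phi> k x = W (of_real x) * of_real (bump (x / real (Suc k)))" for k x
  define \<phi>' where "\<phi>' k x = W' (of_real x) * of_real (bump (x / real (Suc k)))
      + W (of_real x) * of_real (deriv bump (x / real (Suc k)) / real (Suc k))" for k x
  have bound\<phi>: "cmod (\<phi> k x) \<le> (M * K) * (1 + \<bar>x\<bar>) ^ n * exp (c * \<bar>x\<bar>)" for k x
  proof -
    have "cmod (\<phi> k x) \<le> M * cmod (W (of_real x))"
      unfolding \<phi>_def by (rule M(2)) simp
    also have "\<dots> \<le> M * (K * (1 + \<bar>x\<bar>) ^ n * exp (c * \<bar>x\<bar>))"
      by (intro mult_left_mono bound M(1))
    finally show ?thesis
      by (simp add: mult.assoc)
  qed
  have bound\<phi>': "cmod (\<phi>' k x) \<le> (M * (K + K')) * (1 + \<bar>x\<bar>) ^ n * exp (c * \<bar>x\<bar>)" for k x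
  proof -
    have "cmod (\<phi>' k x) \<le> M * (cmod (W (of_real x)) + cmod (W' (of_real x)))"
      unfolding \<phi>'_def by (rule M(3)) simp
    also have "\<dots> \<le> M * (K * (1 + \<bar>x\<bar>) ^ n * exp (c * \<bar>x\<bar>) + K' * (1 + \<bar>x\<bar>) ^ n * exp (c * \<bar>x\<bar>))"
      by (intro mult_left_mono add_mono bound M(1))
    finally show ?thesis
      by (simp add: algebra_simps)
  qed
  have cont\<phi>: "continuous_on UNIV (\<phi> k)" "continuous_on UNIV (\<phi>' k)" for k
    unfolding \<phi>_def \<phi>'_def using continuous_on_bump_rescaled[of "real (Suc k)"] of_nat_neq_0[of k, where 'a=complex]
    by (auto intro!: continuous_intros contW)
  have "(LINT x|lborel. a x * \<phi>' k x) = - (LINT x|lborel. g x * \<phi> k x)" for k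
    unfolding \<phi>_def \<phi>'_def
    by (intro has_weak_deriv_mult_bump[OF weak exp_decaying_measurable[OF a] exp_decaying_measurable[OF g] W]
        integrable_mult_exp_decaying[OF a c cont\<phi>(2) bound\<phi>', unfolded \<phi>'_def]
        integrable_mult_exp_decaying[OF g c cont\<phi>(1) bound\<phi>, unfolded \<phi>_def]) simp
  moreover have "(\<lambda>k. \<phi> k x) \<longlonglongrightarrow> W (of_real x) * of_real 1"
    "(\<lambda>k. \<phi>' k x) \<longlonglongrightarrow> W' (of_real x) * of_real 1 + W (of_real x) * of_real 0" for x
    unfolding \<phi>_def \<phi>'_def by (intro tendsto_intros tendsto_bump_rescaled)+
  then have lim: "(\<lambda>k. \<phi> k x) \<longlonglongrightarrow> W (of_real x)" "(\<lambda>k. \<phi>' k x) \<longlonglongrightarrow> W' (of_real x)" for x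
    by simp_all
  ultimately have "(\<lambda>k. LINT x|lborel. a x * \<phi>' k x) \<longlonglongrightarrow> - (LINT x|lborel. g x * W (of_real x))"
    by (simp only:) (intro tendsto_minus tendsto_integral_mult_exp_decaying[OF g c cont\<phi>(1) contW(1) bound\<phi> lim(1)])
  moreover have "(\<lambda>k. LINT x|lborel. a x * \<phi>' k x) \<longlonglongrightarrow> (LINT x|lborel. a x * W' (of_real x))"
    by (rule tendsto_integral_mult_exp_decaying[OF a c cont\<phi>(2) contW(2) bound\<phi>' lim(2)])
  ultimately show ?thesis
    using LIMSEQ_unique by blast
qed

lemma fourier_moment_weak_deriv:
  assumes a: "exp_decaying b a" and g: "exp_decaying b g" and weak: "has_weak_deriv a g"
    and z: "\<bar>Im z\<bar> < b"
  shows "\<i> * z * fourier_moment a j z = of_nat j * fourier_moment a (j - 1) z + fourier_moment g j z"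
proof -
  have c: "\<bar>Im z\<bar> < b" "\<bar>Im z\<bar> \<le> \<bar>Im z\<bar>"
    using z by auto
  have "(LINT x|lborel. a x * (of_nat j * exp_kernel (j - 1) z (of_real x) - \<i> * z * exp_kernel j z (of_real x)))
      = - fourier_moment g j z"
    unfolding fourier_moment_def
    using norm_exp_kernel_le[OF c(2)] norm_exp_kernel_deriv_le[OF c(2)]
    by (intro has_weak_deriv_entire[OF a g weak has_field_derivative_exp_kernel c(1), where K=1]) simp_all
  moreover have "(LINT x|lborel. a x * (of_nat j * exp_kernel (j - 1) z (of_real x) - \<i> * z * exp_kernel j z (of_real x)))
      = of_nat j * fourier_moment a (j - 1) z - \<i> * z * fourier_moment a j z"
    unfolding fourier_moment_def using integrable_exp_kernel[OF a c(2,1)] by (simp add: algebra_simps)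
  ultimately show ?thesis
    by (simp add: algebra_simps)
qed

lemma norm_exp_kernel_taylor_1_le:
  assumes "\<bar>Im z\<bar> \<le> c"
  shows "cmod (exp_kernel j w (of_real x) - exp_kernel j z (of_real x) + \<i> * (w - z) * exp_kernel (Suc j) z (of_real x))
    \<le> cmod (w - z) ^ 2 * ((1 + \<bar>x\<bar>) ^ (j + 2) * exp ((c + cmod (w - z)) * \<bar>x\<bar>))"
proof -
  define t where "t = - \<i> * (w - z) * of_real x"
  have "exp (- (\<i> * w * of_real x)) = exp (- (\<i> * z * of_real x)) * exp t"
    unfolding t_def by (simp add: algebra_simps flip: exp_add)
  then have eq: "exp_kernel j w (of_real x) - exp_kernel j z (of_real x) + \<i> * (w - z) * exp_kernel (Suc j) z (of_real x)
      = exp_kernel j z (of_real x) * (exp t - (\<Sum>i\<le>1. t ^ i / fact i))"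
    by (simp add: exp_kernel_def t_def algebra_simps)
  have nt: "cmod t = cmod (w - z) * \<bar>x\<bar>"
    by (simp add: t_def norm_mult)
  have "cmod (exp t - (\<Sum>i\<le>1. t ^ i / fact i)) \<le> exp (cmod t) * cmod t ^ 2"
    using Taylor_exp_field[of t 1] by (simp add: numeral_2_eq_2)
  also have "\<dots> \<le> exp (cmod (w - z) * \<bar>x\<bar>) * (cmod (w - z) ^ 2 * (1 + \<bar>x\<bar>) ^ 2)"
    unfolding nt power_mult_distrib by (intro mult_left_mono mult_left_mono power_mono) auto
  finally have "cmod (exp_kernel j w (of_real x) - exp_kernel j z (of_real x) + \<i> * (w - z) * exp_kernel (Suc j) z (of_real x))
      \<le> ((1 + \<bar>x\<bar>) ^ j * exp (c * \<bar>x\<bar>)) * (exp (cmod (w - z) * \<bar>x\<bar>) * (cmod (w - z) ^ 2 * (1 + \<bar>x\<bar>) ^ 2))"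
    unfolding eq norm_mult by (intro mult_mono norm_exp_kernel_le assms) auto
  also have "\<dots> = cmod (w - z) ^ 2 * ((1 + \<bar>x\<bar>) ^ (j + 2) * exp ((c + cmod (w - z)) * \<bar>x\<bar>))"
    unfolding distrib_right exp_add power_add by (simp only: mult_ac)
  finally show ?thesis .
qed

lemma norm_fourier_moment_taylor_1_le:
  assumes G: "exp_decaying b G" and d: "\<bar>Im z\<bar> + d < b" "cmod (w - z) \<le> d"
  shows "cmod (fourier_moment G j w - fourier_moment G j z + \<i> * (w - z) * fourier_moment G (Suc j) z)
    \<le> cmod (w - z) ^ 2 * exp_weighted_norm G (j + 2) (\<bar>Im z\<bar> + d)"
proof -
  have "\<bar>Im w\<bar> \<le> \<bar>Im z\<bar> + d"
    using abs_Im_le_cmod[of "w - z"] d(2) by simp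
  then have int: "integrable lborel (\<lambda>x. G x * exp_kernel k w (of_real x))"
    "integrable lborel (\<lambda>x. G x * exp_kernel k z (of_real x))" for k
    using d order_trans[OF norm_ge_zero d(2)] by (auto intro!: integrable_exp_kernel[OF G])
  have "fourier_moment G j w - fourier_moment G j z + \<i> * (w - z) * fourier_moment G (Suc j) z
      = (LINT x|lborel. G x * exp_kernel j w (of_real x) - G x * exp_kernel j z (of_real x)
          + \<i> * (w - z) * (G x * exp_kernel (Suc j) z (of_real x)))"
    unfolding fourier_moment_def using int by simp
  also have "cmod \<dots> \<le> (LINT x|lborel. cmod (w - z) ^ 2 *
      ((1 + \<bar>x\<bar>) ^ (j + 2) * exp ((\<bar>Im z\<bar> + d) * \<bar>x\<bar>) * cmod (G x)))"
  proof (rule Bochner_Integration.integral_norm_bound_integral[OF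
        Bochner_Integration.integrable_add[OF Bochner_Integration.integrable_diff[OF int]
          Bochner_Integration.integrable_mult_right[OF int(2)]]])
    show "integrable lborel (\<lambda>x. cmod (w - z) ^ 2 *
        ((1 + \<bar>x\<bar>) ^ (j + 2) * exp ((\<bar>Im z\<bar> + d) * \<bar>x\<bar>) * cmod (G x)))"
      by (rule Bochner_Integration.integrable_mult_right[OF exp_decaying_weighted_integrable[OF G d(1)]])
    fix x
    have "cmod (exp_kernel j w (of_real x) - exp_kernel j z (of_real x)
        + \<i> * (w - z) * exp_kernel (Suc j) z (of_real x))
        \<le> cmod (w - z) ^ 2 * ((1 + \<bar>x\<bar>) ^ (j + 2) * exp ((\<bar>Im z\<bar> + cmod (w - z)) * \<bar>x\<bar>))"
      by (rule norm_exp_kernel_taylor_1_le) simp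
    also have "\<dots> \<le> cmod (w - z) ^ 2 * ((1 + \<bar>x\<bar>) ^ (j + 2) * exp ((\<bar>Im z\<bar> + d) * \<bar>x\<bar>))"
      using d(2) by (intro mult_left_mono) (auto simp: mult_right_mono)
    finally have "cmod (G x) * cmod (exp_kernel j w (of_real x) - exp_kernel j z (of_real x)
        + \<i> * (w - z) * exp_kernel (Suc j) z (of_real x))
        \<le> cmod (G x) * (cmod (w - z) ^ 2 * ((1 + \<bar>x\<bar>) ^ (j + 2) * exp ((\<bar>Im z\<bar> + d) * \<bar>x\<bar>)))"
      by (rule mult_left_mono) simp
    moreover have "G x * exp_kernel j w (of_real x) - G x * exp_kernel j z (of_real x)
        + \<i> * (w - z) * (G x * exp_kernel (Suc j) z (of_real x))
        = G x * (exp_kernel j w (of_real x) - exp_kernel j z (of_real x)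
        + \<i> * (w - z) * exp_kernel (Suc j) z (of_real x))"
      by (simp add: algebra_simps)
    ultimately show "norm (G x * exp_kernel j w (of_real x) - G x * exp_kernel j z (of_real x)
        + \<i> * (w - z) * (G x * exp_kernel (Suc j) z (of_real x))) \<le> cmod (w - z) ^ 2 *
        ((1 + \<bar>x\<bar>) ^ (j + 2) * exp ((\<bar>Im z\<bar> + d) * \<bar>x\<bar>) * cmod (G x))"
      by (simp add: norm_mult mult_ac)
  qed
  also have "\<dots> = cmod (w - z) ^ 2 * exp_weighted_norm G (j + 2) (\<bar>Im z\<bar> + d)"
    by (simp add: exp_weighted_norm_def)
  finally show ?thesis .
qed

lemma has_field_derivative_fourier_moment:
  assumes G: "exp_decaying b G" and z: "\<bar>Im z\<bar> < b"
  shows "(fourier_moment G j has_field_derivative - \<i> * fourier_moment G (Suc j) z) (at z)"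
proof -
  define d where "d = (b - \<bar>Im z\<bar>) / 2"
  have d: "d > 0" "\<bar>Im z\<bar> + d < b"
    using z by (auto simp: d_def field_simps)
  define K where "K = exp_weighted_norm G (j + 2) (\<bar>Im z\<bar> + d)"
  have bound: "cmod ((fourier_moment G j w - fourier_moment G j z) / (w - z) + \<i> * fourier_moment G (Suc j) z)
      \<le> cmod (w - z) * K" if w: "cmod (w - z) < d" "w \<noteq> z" for w
  proof -
    have "(fourier_moment G j w - fourier_moment G j z) / (w - z) + \<i> * fourier_moment G (Suc j) z
        = (fourier_moment G j w - fourier_moment G j z + \<i> * (w - z) * fourier_moment G (Suc j) z) / (w - z)"
      using w(2) by (simp add: field_simps)
    moreover have "cmod (fourier_moment G j w - fourier_moment G j z + \<i> * (w - z) * fourier_moment G (Suc j) z)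
        \<le> cmod (w - z) * (cmod (w - z) * K)"
      using norm_fourier_moment_taylor_1_le[OF G d(2)] w(1) by (simp add: K_def power2_eq_square mult.assoc)
    ultimately show ?thesis
      using w(2) by (simp add: norm_divide pos_divide_le_eq mult.commute)
  qed
  have "((\<lambda>w. (fourier_moment G j w - fourier_moment G j z) / (w - z) + \<i> * fourier_moment G (Suc j) z)
      \<longlongrightarrow> 0) (at z)"
  proof (rule Lim_null_comparison)
    show "\<forall>\<^sub>F w in at z. norm ((fourier_moment G j w - fourier_moment G j z) / (w - z)
        + \<i> * fourier_moment G (Suc j) z) \<le> cmod (w - z) * K"
      using d unfolding eventually_at by (intro exI[of _ d]) (auto simp: dist_norm intro!: bound)
    show "((\<lambda>w. cmod (w - z) * K) \<longlongrightarrow> 0) (at z)"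
      by (auto intro!: tendsto_eq_intros)
  qed
  from tendsto_add[OF this tendsto_const[of "- (\<i> * fourier_moment G (Suc j) z)"]]
  show ?thesis
    unfolding has_field_derivative_iff by simp
qed

lemma cderiv_fourier:
  assumes "exp_decaying b \<psi>" "b > 0"
  shows "cderiv n (fourier \<psi>) =
    (\<lambda>\<xi>. complex_of_real (1 / sqrt (2 * pi)) * (- \<i>) ^ n * fourier_moment \<psi> n (of_real \<xi>))"
proof (induction n)
  case 0
  have "exp_kernel 0 (of_real \<xi>) (of_real x) = cis (- (\<xi> * x))" for \<xi> x
    by (simp add: exp_kernel_def cis_conv_exp mult.assoc)
  then show ?case
    by (simp add: fourier_def[abs_def] fourier_moment_def)
next
  case (Suc n)
  have "((\<lambda>\<xi>. complex_of_real (1 / sqrt (2 * pi)) * (- \<i>) ^ n * fourier_moment \<psi> n (of_real \<xi>))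
      has_vector_derivative
        complex_of_real (1 / sqrt (2 * pi)) * (- \<i>) ^ Suc n * fourier_moment \<psi> (Suc n) (of_real \<xi>)) (at \<xi>)"
    for \<xi>
    using has_field_derivative_fourier_moment[OF assms(1), of "of_real \<xi>" n] assms(2)
    by (intro has_vector_derivative_real_field) (auto intro!: derivative_eq_intros simp: mult_ac)
  then show ?case
    using Suc by (auto intro: vector_derivative_at)
qed

lemma norm_fourier_moment_recursion:
  assumes "exp_decaying b a" "exp_decaying b g" "has_weak_deriv a g" "\<bar>Im z\<bar> < b"
  shows "cmod z * cmod (fourier_moment a j z)
    \<le> j * cmod (fourier_moment a (j - 1) z) + cmod (fourier_moment g j z)"
proof -
  have "cmod (\<i> * z * fourier_moment a j z)
      \<le> cmod (of_nat j * fourier_moment a (j - 1) z) + cmod (fourier_moment g j z)"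
    unfolding fourier_moment_weak_deriv[OF assms] by (rule norm_triangle_ineq)
  then show ?thesis
    by (simp add: norm_mult)
qed

text \<open>Two weak derivatives give \<open>O(1/|z|\<^sup>2)\<close> decay in the closed strip \<open>|Im z| \<le> c\<close>:
  each application of \<open>norm_fourier_moment_recursion\<close> trades a factor \<open>|z|\<close> for one
  derivative, at the cost of lowering the moment.\<close>

lemma fourier_moment_decay:
  assumes \<psi>: "exp_decaying b \<psi>" and g\<^sub>1: "exp_decaying b g\<^sub>1" and g\<^sub>2: "exp_decaying b g\<^sub>2"
    and weak: "has_weak_deriv \<psi> g\<^sub>1" "has_weak_deriv g\<^sub>1 g\<^sub>2" and c: "c < b"
  obtains K where "\<And>z. \<bar>Im z\<bar> \<le> c \<Longrightarrow> (1 + cmod z ^ 2) * cmod (fourier_moment \<psi> r z) \<le> K"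
proof -
  define N where "N = exp_weighted_norm \<psi> r c + exp_weighted_norm g\<^sub>1 r c + exp_weighted_norm g\<^sub>2 r c"
  have "(1 + cmod z ^ 2) * cmod (fourier_moment \<psi> r z) \<le> (1 + (r + 1) ^ 2) * N" if z: "\<bar>Im z\<bar> \<le> c" for z
  proof -
    have zb: "\<bar>Im z\<bar> < b"
      using z c by simp
    have bounded: "cmod (fourier_moment G j z) \<le> N" if "G \<in> {\<psi>, g\<^sub>1, g\<^sub>2}" "j \<le> r" for G j
    proof -
      have "cmod (fourier_moment G j z) \<le> exp_weighted_norm G r c"
        using that \<psi> g\<^sub>1 g\<^sub>2 norm_fourier_moment_le[OF _ z c] by auto
      also have "\<dots> \<le> N"
        using that exp_weighted_norm_nonneg[of \<psi> r c] exp_weighted_norm_nonneg[of g\<^sub>1 r c]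
          exp_weighted_norm_nonneg[of g\<^sub>2 r c] unfolding N_def by auto
      finally show ?thesis .
    qed
    have step: "cmod z * cmod (fourier_moment a j z) \<le> (r + 1) * N"
      if "has_weak_deriv a g" "exp_decaying b a" "exp_decaying b g" "a \<in> {\<psi>, g\<^sub>1, g\<^sub>2}" "g \<in> {\<psi>, g\<^sub>1, g\<^sub>2}"
        "j \<le> r" for a g j
    proof -
      have "j * cmod (fourier_moment a (j - 1) z) \<le> r * N"
        using bounded[of a "j - 1"] that exp_weighted_norm_nonneg by (intro mult_mono) (auto simp: N_def)
      then show ?thesis
        using norm_fourier_moment_recursion[OF that(2,3,1) zb, of j] bounded[of g j] that
        by (simp add: algebra_simps)
    qed
    have "cmod z ^ 2 * cmod (fourier_moment \<psi> r z)
        \<le> cmod z * (r * cmod (fourier_moment \<psi> (r - 1) z) + cmod (fourier_moment g\<^sub>1 r z))"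
      unfolding power2_eq_square mult.assoc
      by (intro mult_left_mono norm_fourier_moment_recursion[OF \<psi> g\<^sub>1 weak(1) zb]) auto
    also have "\<dots> = r * (cmod z * cmod (fourier_moment \<psi> (r - 1) z)) + cmod z * cmod (fourier_moment g\<^sub>1 r z)"
      by (simp add: algebra_simps)
    also have "\<dots> \<le> r * ((r + 1) * N) + (r + 1) * N"
      using step[OF weak(1) \<psi> g\<^sub>1, of "r - 1"] step[OF weak(2) g\<^sub>1 g\<^sub>2, of r]
      by (intro add_mono mult_left_mono) auto
    finally have "cmod z ^ 2 * cmod (fourier_moment \<psi> r z) \<le> (r + 1) ^ 2 * N"
      by (simp add: power2_eq_square algebra_simps)
    then show ?thesis
      using bounded[of \<psi> r] by (simp add: algebra_simps)
  qed
  then show ?thesis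
    using that by blast
qed

lemma norm_exp_kernel_minus_taylor_le:
  assumes z: "cmod z \<le> d"
  shows "cmod (exp_kernel r z (of_real x) - (\<Sum>k\<le>m. (- \<i> * z) ^ k / fact k * exp_kernel (r + k) 0 (of_real x)))
    \<le> cmod z ^ (m + 1) * ((1 + \<bar>x\<bar>) ^ (r + m + 1) * exp (d * \<bar>x\<bar>))"
proof -
  define t where "t = - \<i> * z * of_real x"
  have "(- \<i> * z) ^ k / fact k * exp_kernel (r + k) 0 (of_real x) = of_real x ^ r * (t ^ k / fact k)" for k
    unfolding t_def exp_kernel_def power_mult_distrib power_add by simp
  then have eq: "exp_kernel r z (of_real x) - (\<Sum>k\<le>m. (- \<i> * z) ^ k / fact k * exp_kernel (r + k) 0 (of_real x))
      = of_real x ^ r * (exp t - (\<Sum>k\<le>m. t ^ k / fact k))"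
    by (simp add: t_def exp_kernel_def right_diff_distrib sum_distrib_left)
  have nt: "cmod t = cmod z * \<bar>x\<bar>"
    by (simp add: t_def norm_mult)
  have "cmod (exp t - (\<Sum>k\<le>m. t ^ k / fact k)) \<le> exp (cmod t) * cmod t ^ (m + 1) / fact m"
    using Taylor_exp_field[of t m] by simp
  also have "\<dots> \<le> exp (cmod t) * cmod t ^ (m + 1)"
    using divide_left_mono[OF fact_ge_1[of m], of "exp (cmod t) * cmod t ^ (m + 1)"] by simp
  also have "\<dots> \<le> exp (d * \<bar>x\<bar>) * (cmod z ^ (m + 1) * (1 + \<bar>x\<bar>) ^ (m + 1))"
    unfolding nt power_mult_distrib using z
    by (intro mult_mono power_mono mult_left_mono) (auto intro: mult_right_mono)
  finally have "cmod (of_real x ^ r * (exp t - (\<Sum>k\<le>m. t ^ k / fact k)))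
      \<le> (1 + \<bar>x\<bar>) ^ r * (exp (d * \<bar>x\<bar>) * (cmod z ^ (m + 1) * (1 + \<bar>x\<bar>) ^ (m + 1)))"
    unfolding norm_mult norm_power by (intro mult_mono power_mono) auto
  then show ?thesis
    unfolding eq by (simp add: power_add mult_ac)
qed

text \<open>The vanishing moments kill the Taylor polynomial of order \<open>m\<close> of \<open>fourier_moment \<psi> r\<close>
  at \<open>0\<close>, leaving the Taylor remainder of the kernel.\<close>

lemma fourier_moment_vanishing_order:
  assumes \<psi>: "exp_decaying b \<psi>" and d: "0 < d" "d < b"
    and vanish: "\<forall>k\<le>m. fourier_moment \<psi> (r + k) 0 = 0"
  obtains K where "\<And>z. cmod z \<le> d \<Longrightarrow> cmod (fourier_moment \<psi> r z) \<le> K * cmod z ^ (m + 1)"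
proof -
  define K where "K = exp_weighted_norm \<psi> (r + m + 1) d"
  have "cmod (fourier_moment \<psi> r z) \<le> K * cmod z ^ (m + 1)" if z: "cmod z \<le> d" for z
  proof -
    define T where "T x = (\<Sum>k\<le>m. (- \<i> * z) ^ k / fact k * exp_kernel (r + k) 0 (of_real x))" for x
    have int: "integrable lborel (\<lambda>x. \<psi> x * exp_kernel k w (of_real x))" if "cmod w \<le> d" for k w
      using abs_Im_le_cmod[of w] that d by (intro integrable_exp_kernel[OF \<psi>]) auto
    then have intT: "integrable lborel (\<lambda>x. \<psi> x * T x)"
      using d by (simp add: T_def sum_distrib_left mult.left_commute[of "\<psi> _"])
    have "(LINT x|lborel. \<psi> x * T x) = 0"
      using vanish int[of 0] d by (simp add: T_def sum_distrib_left mult.left_commute[of "\<psi> _"] fourier_moment_def)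
    then have "fourier_moment \<psi> r z = (LINT x|lborel. \<psi> x * (exp_kernel r z (of_real x) - T x))"
      using int[OF z] intT by (simp add: fourier_moment_def right_diff_distrib)
    also have "cmod \<dots> \<le> (LINT x|lborel. cmod z ^ (m + 1) * ((1 + \<bar>x\<bar>) ^ (r + m + 1) * exp (d * \<bar>x\<bar>) * cmod (\<psi> x)))"
    proof (rule Bochner_Integration.integral_norm_bound_integral)
      show "integrable lborel (\<lambda>x. \<psi> x * (exp_kernel r z (of_real x) - T x))"
        using int[OF z] intT by (simp add: right_diff_distrib)
      show "integrable lborel (\<lambda>x. cmod z ^ (m + 1) * ((1 + \<bar>x\<bar>) ^ (r + m + 1) * exp (d * \<bar>x\<bar>) * cmod (\<psi> x)))"
        by (rule Bochner_Integration.integrable_mult_right[OF exp_decaying_weighted_integrable[OF \<psi> d(2)]])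
      show "norm (\<psi> x * (exp_kernel r z (of_real x) - T x))
          \<le> cmod z ^ (m + 1) * ((1 + \<bar>x\<bar>) ^ (r + m + 1) * exp (d * \<bar>x\<bar>) * cmod (\<psi> x))" for x
        using mult_left_mono[OF norm_exp_kernel_minus_taylor_le[OF z, of r x m] norm_ge_zero[of "\<psi> x"]]
        by (simp add: T_def norm_mult mult_ac)
    qed
    also have "\<dots> = K * cmod z ^ (m + 1)"
      by (simp add: K_def exp_weighted_norm_def)
    finally show ?thesis .
  qed
  then show ?thesis
    using that by blast
qed

section \<open>The quotient by \<open>z\<^sup>m\<close>\<close>

text \<open>At \<open>z = 0\<close> the quotient is \<open>0\<close> (division by zero when \<open>m > 0\<close>; the vanishing
  hypothesis when \<open>m = 0\<close>), which under that hypothesis is its continuous extension.\<close>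

definition moment_quotient :: "(real \<Rightarrow> complex) \<Rightarrow> nat \<Rightarrow> nat \<Rightarrow> complex \<Rightarrow> complex" where
  "moment_quotient \<psi> r m z = fourier_moment \<psi> r z / z ^ m"

lemma moment_quotient_near_0:
  assumes \<psi>: "exp_decaying b \<psi>" and d: "0 < d" "d < b"
    and vanish: "\<forall>k\<le>m. fourier_moment \<psi> (r + k) 0 = 0"
  obtains K where "\<And>z. cmod z \<le> d \<Longrightarrow> cmod (moment_quotient \<psi> r m z) \<le> K * cmod z"
proof -
  obtain K where K: "\<And>z. cmod z \<le> d \<Longrightarrow> cmod (fourier_moment \<psi> r z) \<le> K * cmod z ^ (m + 1)"
    using fourier_moment_vanishing_order[OF \<psi> d vanish] by blast
  have "cmod (moment_quotient \<psi> r m z) \<le> K * cmod z" if z: "cmod z \<le> d" for z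
  proof (cases "z = 0")
    case True
    then show ?thesis
      using vanish by (cases m) (auto simp: moment_quotient_def)
  next
    case False
    have "cmod (moment_quotient \<psi> r m z) = cmod (fourier_moment \<psi> r z) / cmod z ^ m"
      by (simp add: moment_quotient_def norm_divide norm_power)
    also have "\<dots> \<le> K * cmod z ^ (m + 1) / cmod z ^ m"
      by (intro divide_right_mono K[OF z]) auto
    also have "\<dots> = K * cmod z"
      using False by (simp add: field_simps)
    finally show ?thesis .
  qed
  then show ?thesis
    using that by blast
qed

lemma moment_quotient_field_differentiable:
  assumes "exp_decaying b \<psi>" "\<bar>Im z\<bar> < b" "z \<noteq> 0"
  shows "moment_quotient \<psi> r m field_differentiable (at z)"
proof -
  have "fourier_moment \<psi> r field_differentiable (at z)"
    using has_field_derivative_fourier_moment[OF assms(1,2)] field_differentiable_def by blast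
  then show ?thesis
    unfolding moment_quotient_def[abs_def] using assms(3)
    by (intro field_differentiable_divide field_differentiable_power) (auto simp: field_differentiable_ident)
qed

lemma moment_quotient_continuous_on:
  assumes \<psi>: "exp_decaying b \<psi>" and c: "0 < c" "c < b"
    and vanish: "\<forall>k\<le>m. fourier_moment \<psi> (r + k) 0 = 0"
  shows "continuous_on {w. \<bar>Im w\<bar> \<le> c} (moment_quotient \<psi> r m)"
proof -
  have "isCont (moment_quotient \<psi> r m) w" if "\<bar>Im w\<bar> \<le> c" for w
  proof (cases "w = 0")
    case True
    obtain K where K: "\<And>z. cmod z \<le> c \<Longrightarrow> cmod (moment_quotient \<psi> r m z) \<le> K * cmod z"
      using moment_quotient_near_0[OF \<psi> c vanish] by blast
    have "(moment_quotient \<psi> r m \<longlongrightarrow> 0) (at 0)"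
    proof (rule Lim_null_comparison)
      show "\<forall>\<^sub>F z in at 0. norm (moment_quotient \<psi> r m z) \<le> K * cmod z"
        unfolding eventually_at using c by (intro exI[of _ c]) (auto intro!: K simp: dist_norm)
      show "((\<lambda>z. K * cmod z) \<longlongrightarrow> 0) (at 0)"
        by (auto intro!: tendsto_eq_intros)
    qed
    moreover have "moment_quotient \<psi> r m 0 = 0"
      using K[of 0] c by simp
    ultimately show ?thesis
      using True by (simp add: isCont_def)
  next
    case False
    have "moment_quotient \<psi> r m field_differentiable at w"
      using moment_quotient_field_differentiable[OF \<psi> _ False] that c by simp
    then show ?thesis
      by (rule field_differentiable_imp_continuous_at)
  qed
  then show ?thesis
    by (intro continuous_at_imp_continuous_on) auto
qed

lemma moment_quotient_decay:
  assumes \<psi>: "exp_decaying b \<psi>" and d: "0 < d" "d < b"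
    and vanish: "\<forall>k\<le>m. fourier_moment \<psi> (r + k) 0 = 0"
    and decay: "\<And>z. \<bar>Im z\<bar> \<le> c \<Longrightarrow> (1 + cmod z ^ 2) * cmod (fourier_moment \<psi> r z) \<le> K"
  obtains K' where "\<And>z. \<bar>Im z\<bar> \<le> c \<Longrightarrow> cmod (moment_quotient \<psi> r m z) \<le> K' / (1 + (Re z)\<^sup>2)"
proof -
  obtain K1 where K1: "\<And>z. cmod z \<le> d \<Longrightarrow> cmod (moment_quotient \<psi> r m z) \<le> K1 * cmod z"
    using moment_quotient_near_0[OF \<psi> d vanish] by blast
  define K' where "K' = \<bar>K1\<bar> * d * (1 + d\<^sup>2) + \<bar>K\<bar> / d ^ m"
  have Re_pos: "0 < 1 + (Re z)\<^sup>2" for z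
    by (simp add: add_pos_nonneg)
  have "cmod (moment_quotient \<psi> r m z) \<le> K' / (1 + (Re z)\<^sup>2)" if z: "\<bar>Im z\<bar> \<le> c" for z
  proof (cases "cmod z \<le> d")
    case True
    have "(Re z)\<^sup>2 \<le> d\<^sup>2"
      using abs_Re_le_cmod[of z] True by (simp add: abs_le_square_iff[symmetric] abs_le_iff)
    then have "d / (1 + (Re z)\<^sup>2) \<ge> d / (1 + d\<^sup>2)"
      using d by (intro divide_left_mono) (auto simp: add_pos_nonneg)
    then have "\<bar>K1\<bar> * d \<le> \<bar>K1\<bar> * d * (1 + d\<^sup>2) / (1 + (Re z)\<^sup>2)"
      using d by (simp add: field_simps add_pos_nonneg mult_left_mono)
    moreover have "cmod (moment_quotient \<psi> r m z) \<le> \<bar>K1\<bar> * d"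
      using K1[OF True] True by (meson abs_ge_self abs_ge_zero mult_mono norm_ge_zero order_trans)
    moreover have "\<bar>K1\<bar> * d * (1 + d\<^sup>2) / (1 + (Re z)\<^sup>2) \<le> K' / (1 + (Re z)\<^sup>2)"
      unfolding K'_def using d Re_pos[of z] by (intro divide_right_mono) auto
    ultimately show ?thesis
      by linarith
  next
    case False
    have "(1 + (Re z)\<^sup>2) * cmod (fourier_moment \<psi> r z) \<le> (1 + cmod z ^ 2) * cmod (fourier_moment \<psi> r z)"
      using abs_Re_le_cmod[of z] by (intro mult_right_mono) (auto simp: abs_le_square_iff[symmetric])
    also have "\<dots> \<le> \<bar>K\<bar>"
      using decay[OF z] by simp
    finally have F: "cmod (fourier_moment \<psi> r z) \<le> \<bar>K\<bar> / (1 + (Re z)\<^sup>2)"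
      using Re_pos[of z] by (simp add: pos_le_divide_eq mult.commute)
    have "cmod (moment_quotient \<psi> r m z) = cmod (fourier_moment \<psi> r z) / cmod z ^ m"
      by (simp add: moment_quotient_def norm_divide norm_power)
    also have "\<dots> \<le> cmod (fourier_moment \<psi> r z) / d ^ m"
    proof (rule divide_left_mono)
      show "d ^ m \<le> cmod z ^ m"
        using False d by (intro power_mono) auto
      show "0 < cmod z ^ m * d ^ m"
        using False d by (intro mult_pos_pos zero_less_power) auto
    qed simp
    also have "\<dots> \<le> (\<bar>K\<bar> / (1 + (Re z)\<^sup>2)) / d ^ m"
      using d F by (intro divide_right_mono) auto
    also have "\<dots> = (\<bar>K\<bar> / d ^ m) / (1 + (Re z)\<^sup>2)"
      by simp
    also have "\<dots> \<le> K' / (1 + (Re z)\<^sup>2)"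
      unfolding K'_def using d Re_pos[of z] by (intro divide_right_mono) auto
    finally show ?thesis .
  qed
  then show ?thesis
    using that by blast
qed


section \<open>Shifting the line of integration in a strip\<close>

lemma contour_integral_quadrilateral_eq_0:
  assumes S: "convex S" "continuous_on S h" "finite E"
    and d: "\<And>x. x \<in> interior S - E \<Longrightarrow> h field_differentiable at x"
    and pts: "a \<in> S" "b \<in> S" "c \<in> S" "e \<in> S"
  shows "contour_integral (linepath a b) h + (contour_integral (linepath b c) h +
     (contour_integral (linepath c e) h + contour_integral (linepath e a) h)) = 0"
proof -
  have hc: "(h has_contour_integral contour_integral (linepath p q) h) (linepath p q)"
    if "p \<in> S" "q \<in> S" for p q
  proof -
    have "continuous_on (closed_segment p q) h"
      using closed_segment_subset[OF that S(1)] S(2) continuous_on_subset by blast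
    then show ?thesis
      by (intro has_contour_integral_integral contour_integrable_continuous_linepath)
  qed
  define g where "g = linepath a b +++ (linepath b c +++ (linepath c e +++ linepath e a))"
  have "(h has_contour_integral (contour_integral (linepath a b) h + (contour_integral (linepath b c) h +
     (contour_integral (linepath c e) h + contour_integral (linepath e a) h)))) g"
    unfolding g_def by (intro has_contour_integral_join hc pts valid_path_join) auto
  moreover have "(h has_contour_integral 0) g"
  proof (rule Cauchy_theorem_convex[OF S(2) S(1) S(3) d])
    show "valid_path g"
      unfolding g_def by (intro valid_path_join) auto
    show "path_image g \<subseteq> S"
      unfolding g_def using closed_segment_subset[OF _ _ S(1)] pts by (subst path_image_join; simp)+
    show "pathfinish g = pathstart g"
      unfolding g_def by simp
  qed
  ultimately show ?thesis
    using has_contour_integral_unique by blast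
qed

lemma closed_segment_vertical:
  assumes "w \<in> closed_segment (of_real R) (of_real R + \<i> * of_real \<eta>)"
  shows "Re w = R" "\<bar>Im w\<bar> \<le> \<bar>\<eta>\<bar>"
proof -
  obtain u where u: "0 \<le> u" "u \<le> 1" "w = (1 - u) *\<^sub>R of_real R + u *\<^sub>R (of_real R + \<i> * of_real \<eta>)"
    using assms unfolding in_segment by blast
  then have "Re w = R" "Im w = u * \<eta>"
    by (simp_all add: algebra_simps)
  then show "Re w = R" "\<bar>Im w\<bar> \<le> \<bar>\<eta>\<bar>"
    using u(1,2) by (auto simp: abs_mult mult_le_cancel_right1 intro: mult_left_le_one_le)
qed

lemma tendsto_integral_Icc_symmetric:
  fixes F :: "real \<Rightarrow> complex"
  assumes "integrable lborel F"
  shows "(\<lambda>n. integral {- real n..real n} F) \<longlonglongrightarrow> (LINT x|lborel. F x)"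
proof -
  have si: "set_integrable lborel {- real n..real n} F" for n
    unfolding set_integrable_def by (rule integrable_mult_indicator[OF _ assms]) auto
  have eq: "integral {- real n..real n} F = (LINT x|lborel. indicator {- real n..real n} x *\<^sub>R F x)" for n
    using set_borel_integral_eq_integral(2)[OF si[of n]] by (simp add: set_lebesgue_integral_def)
  have "(\<lambda>n. LINT x|lborel. indicator {- real n..real n} x *\<^sub>R F x) \<longlonglongrightarrow> (LINT x|lborel. F x)"
  proof (rule integral_dominated_convergence[where w="\<lambda>x. norm (F x)"])
    show "F \<in> borel_measurable lborel" "integrable lborel (\<lambda>x. norm (F x))"
      using assms by auto
    show "(\<lambda>x. indicator {- real n..real n} x *\<^sub>R F x) \<in> borel_measurable lborel" for n
      using si[of n] unfolding set_integrable_def by auto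
    show "AE x in lborel. (\<lambda>n. indicator {- real n..real n} x *\<^sub>R F x) \<longlonglongrightarrow> F x"
    proof (rule AE_I2)
      fix x :: real
      obtain N :: nat where N: "\<bar>x\<bar> \<le> real N"
        using real_arch_simple by blast
      have "indicator {- real n..real n} x *\<^sub>R F x = F x" if "n \<ge> N" for n
        using N that by (simp add: indicator_def abs_le_iff)
      then show "(\<lambda>n. indicator {- real n..real n} x *\<^sub>R F x) \<longlonglongrightarrow> F x"
        by (intro tendsto_eventually) (auto simp: eventually_sequentially)
    qed
    show "AE x in lborel. norm (indicator {- real n..real n} x *\<^sub>R F x) \<le> norm (F x)" for n
      by (rule AE_I2) (simp add: indicator_def)
  qed
  then show ?thesis
    by (simp add: eq)
qed

lemma convex_strip: "convex {w. \<bar>Im w\<bar> \<le> c}"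
proof -
  have "{w. \<bar>Im w\<bar> \<le> c} = {w. Im w \<le> c} \<inter> {w. Im w \<ge> - c}"
    by auto
  then show ?thesis
    using convex_halfspace_Im_le convex_halfspace_Im_ge convex_Int by metis
qed

lemma strip_decay_constant_nonneg:
  assumes "0 \<le> c" "\<And>w. \<bar>Im w\<bar> \<le> c \<Longrightarrow> cmod (h w) \<le> K / (1 + (Re w)\<^sup>2)"
  shows "0 \<le> K"
proof -
  have "cmod (h 0) \<le> K"
    using assms(2)[of 0] assms(1) by simp
  then show ?thesis
    using norm_ge_zero order_trans by blast
qed

lemma contour_integral_horizontal_linepath:
  assumes "R > 0"
  shows "contour_integral (linepath (of_real (- R) + z) (of_real R + z)) h
    = integral {-R..R} (\<lambda>x. h (of_real x + z))"
proof -
  have "contour_integral (linepath (of_real (- R) + z) (of_real R + z)) h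
      = contour_integral ((+) z \<circ> linepath (of_real (- R)) (of_real R)) h"
    by (simp add: linepath_translate add.commute)
  also have "\<dots> = contour_integral (linepath (of_real (- R)) (of_real R)) (\<lambda>x. h (x + z))"
    by (rule contour_integral_translate)
  also have "\<dots> = integral {-R..R} (\<lambda>x. h (of_real x + z))"
    using assms by (subst contour_integral_linepath_Reals_eq) auto
  finally show ?thesis .
qed

lemma norm_contour_integral_vertical_linepath_le:
  assumes \<eta>: "\<bar>\<eta>\<bar> \<le> c" and cont: "continuous_on {w. \<bar>Im w\<bar> \<le> c} h"
    and dec: "\<And>w. \<bar>Im w\<bar> \<le> c \<Longrightarrow> cmod (h w) \<le> K / (1 + (Re w)\<^sup>2)"
  shows "cmod (contour_integral (linepath (of_real s) (of_real s + \<i> * of_real \<eta>)) h) \<le> K / (1 + s\<^sup>2) * \<bar>\<eta>\<bar>"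
proof -
  have seg: "closed_segment (of_real s) (of_real s + \<i> * of_real \<eta>) \<subseteq> {w. \<bar>Im w\<bar> \<le> c}"
    using closed_segment_vertical(2)[of _ s \<eta>] \<eta> by force
  then have "(h has_contour_integral contour_integral (linepath (of_real s) (of_real s + \<i> * of_real \<eta>)) h)
      (linepath (of_real s) (of_real s + \<i> * of_real \<eta>))"
    using continuous_on_subset[OF cont]
    by (intro has_contour_integral_integral contour_integrable_continuous_linepath) auto
  then have "cmod (contour_integral (linepath (of_real s) (of_real s + \<i> * of_real \<eta>)) h)
      \<le> K / (1 + s\<^sup>2) * cmod (of_real s + \<i> * of_real \<eta> - of_real s)"
  proof (rule has_contour_integral_bound_linepath)
    show "0 \<le> K / (1 + s\<^sup>2)"
      using strip_decay_constant_nonneg[OF order_trans[OF abs_ge_zero \<eta>] dec] by simp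
    show "cmod (h w) \<le> K / (1 + s\<^sup>2)" if "w \<in> closed_segment (of_real s) (of_real s + \<i> * of_real \<eta>)" for w
      using dec[of w] seg that closed_segment_vertical(1)[OF that] by auto
  qed
  then show ?thesis
    by (simp add: norm_mult)
qed

lemma strip_rectangle_bound:
  fixes h :: "complex \<Rightarrow> complex"
  assumes \<eta>: "\<bar>\<eta>\<bar> \<le> c" and R: "R \<ge> 1"
    and cont: "continuous_on {w. \<bar>Im w\<bar> \<le> c} h"
    and diff: "finite E" "\<And>w. \<bar>Im w\<bar> \<le> c \<Longrightarrow> w \<notin> E \<Longrightarrow> h field_differentiable at w"
    and dec: "\<And>w. \<bar>Im w\<bar> \<le> c \<Longrightarrow> cmod (h w) \<le> K / (1 + (Re w)\<^sup>2)"
  shows "cmod (integral {-R..R} (\<lambda>x. h (of_real x)) - integral {-R..R} (\<lambda>x. h (of_real x + \<i> * of_real \<eta>)))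
    \<le> 2 * K * \<bar>\<eta>\<bar> / R"
proof -
  define a where "a = complex_of_real (- R)"
  define b where "b = complex_of_real R"
  define z where "z = \<i> * complex_of_real \<eta>"
  have pts: "a \<in> {w. \<bar>Im w\<bar> \<le> c}" "b \<in> {w. \<bar>Im w\<bar> \<le> c}" "b + z \<in> {w. \<bar>Im w\<bar> \<le> c}" "a + z \<in> {w. \<bar>Im w\<bar> \<le> c}"
    using \<eta> by (auto simp: a_def b_def z_def)
  have "contour_integral (linepath a b) h + (contour_integral (linepath b (b + z)) h +
      (contour_integral (linepath (b + z) (a + z)) h + contour_integral (linepath (a + z) a) h)) = 0"
    using diff interior_subset
    by (intro contour_integral_quadrilateral_eq_0[OF convex_strip cont diff(1) _ pts]) blast
  moreover have "contour_integral (linepath a b) h = integral {-R..R} (\<lambda>x. h (of_real x))"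
    using contour_integral_horizontal_linepath[of R 0 h] R by (simp add: a_def b_def)
  moreover have "contour_integral (linepath (b + z) (a + z)) h = - contour_integral (linepath (a + z) (b + z)) h"
    using continuous_on_subset[OF cont closed_segment_subset[OF pts(4,3) convex_strip]]
    by (intro contour_integral_reverse_linepath) (metis closed_segment_commute)
  moreover have "contour_integral (linepath (a + z) (b + z)) h = integral {-R..R} (\<lambda>x. h (of_real x + \<i> * of_real \<eta>))"
    using contour_integral_horizontal_linepath[of R z h] R by (simp add: a_def b_def z_def)
  moreover have "contour_integral (linepath (a + z) a) h = - contour_integral (linepath a (a + z)) h"
    using continuous_on_subset[OF cont closed_segment_subset[OF pts(1,4) convex_strip]]
    by (intro contour_integral_reverse_linepath) (metis closed_segment_commute)
  ultimately have "integral {-R..R} (\<lambda>x. h (of_real x)) - integral {-R..R} (\<lambda>x. h (of_real x + \<i> * of_real \<eta>))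
      = contour_integral (linepath a (a + z)) h - contour_integral (linepath b (b + z)) h"
    by (simp add: algebra_simps)
  then have "cmod (integral {-R..R} (\<lambda>x. h (of_real x)) - integral {-R..R} (\<lambda>x. h (of_real x + \<i> * of_real \<eta>)))
      \<le> cmod (contour_integral (linepath a (a + z)) h) + cmod (contour_integral (linepath b (b + z)) h)"
    by (simp only: norm_triangle_ineq4)
  also have "\<dots> \<le> K / (1 + R\<^sup>2) * \<bar>\<eta>\<bar> + K / (1 + R\<^sup>2) * \<bar>\<eta>\<bar>"
    using norm_contour_integral_vertical_linepath_le[OF \<eta> cont dec, of "- R"]
      norm_contour_integral_vertical_linepath_le[OF \<eta> cont dec, of R]
    unfolding a_def b_def z_def by (intro add_mono) simp_all
  also have "\<dots> = 2 * K * \<bar>\<eta>\<bar> / (1 + R\<^sup>2)"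
    by (simp add: field_simps)
  also have "\<dots> \<le> 2 * K * \<bar>\<eta>\<bar> / R"
  proof (rule divide_left_mono)
    have "R * 1 \<le> R * R"
      using R by (intro mult_left_mono) auto
    then show "R \<le> 1 + R\<^sup>2"
      by (simp add: power2_eq_square)
    show "0 \<le> 2 * K * \<bar>\<eta>\<bar>"
      using strip_decay_constant_nonneg[OF order_trans[OF abs_ge_zero \<eta>] dec] by simp
  qed (use R in \<open>auto intro!: mult_pos_pos add_pos_nonneg\<close>)
  finally show ?thesis .
qed

lemma norm_fourier_const_le_1: "cmod (complex_of_real (1 / sqrt (2 * pi))) \<le> 1"
proof -
  have "1 \<le> sqrt (2 * pi)"
    using pi_gt3 by (intro real_le_rsqrt) simp
  then show ?thesis
    unfolding norm_of_real by simp
qed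

lemma integrable_one_div_one_plus_square: "integrable lborel (\<lambda>x::real. 1 / (1 + x\<^sup>2))"
  using integrable_inverse_1_plus_square by (simp add: set_integrable_def divide_inverse)

lemma integrable_horizontal_line_in_strip:
  assumes \<eta>: "\<bar>\<eta>\<bar> \<le> c" and cont: "continuous_on {w. \<bar>Im w\<bar> \<le> c} h"
    and dec: "\<And>w. \<bar>Im w\<bar> \<le> c \<Longrightarrow> cmod (h w) \<le> K / (1 + (Re w)\<^sup>2)"
  shows "integrable lborel (\<lambda>x. h (of_real x + \<i> * of_real \<eta>))"
proof (rule Bochner_Integration.integrable_bound)
  show "integrable lborel (\<lambda>x::real. K * (1 / (1 + x\<^sup>2)))"
    by (intro Bochner_Integration.integrable_mult_right integrable_one_div_one_plus_square)
  have "continuous_on UNIV (\<lambda>x. h (of_real x + \<i> * of_real \<eta>))"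
    by (rule continuous_on_compose2[OF cont]) (use \<eta> in \<open>auto intro!: continuous_intros\<close>)
  then show "(\<lambda>x. h (of_real x + \<i> * of_real \<eta>)) \<in> borel_measurable lborel"
    using borel_measurable_continuous_onI by simp
  show "AE x in lborel. norm (h (of_real x + \<i> * of_real \<eta>)) \<le> norm (K * (1 / (1 + x\<^sup>2)))"
    using dec[of "of_real _ + \<i> * of_real \<eta>"] \<eta> strip_decay_constant_nonneg[OF order_trans[OF abs_ge_zero \<eta>] dec]
    by (intro AE_I2) (simp add: abs_mult)
qed

text \<open>Cauchy's theorem on the rectangles \<open>[-R, R] \<times> [0, \<eta>]\<close>, whose vertical sides
  contribute \<open>O(1/R)\<close>.\<close>

lemma integral_shift_in_strip:
  fixes h :: "complex \<Rightarrow> complex"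
  assumes \<eta>: "\<bar>\<eta>\<bar> \<le> c"
    and cont: "continuous_on {w. \<bar>Im w\<bar> \<le> c} h"
    and diff: "finite E" "\<And>w. \<bar>Im w\<bar> \<le> c \<Longrightarrow> w \<notin> E \<Longrightarrow> h field_differentiable at w"
    and dec: "\<And>w. \<bar>Im w\<bar> \<le> c \<Longrightarrow> cmod (h w) \<le> K / (1 + (Re w)\<^sup>2)"
  shows "(LINT x|lborel. h (of_real x)) = (LINT x|lborel. h (of_real x + \<i> * of_real \<eta>))"
proof -
  define f where "f x = h (of_real x)" for x
  define g where "g x = h (of_real x + \<i> * of_real \<eta>)" for x
  have "integrable lborel f" "integrable lborel g"
    using integrable_horizontal_line_in_strip[OF _ cont dec, of 0] \<eta>
      integrable_horizontal_line_in_strip[OF \<eta> cont dec]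
    unfolding f_def g_def by auto
  then have "(\<lambda>n. integral {- real (Suc n)..real (Suc n)} f - integral {- real (Suc n)..real (Suc n)} g)
      \<longlonglongrightarrow> (LINT x|lborel. f x) - (LINT x|lborel. g x)"
    by (intro tendsto_diff LIMSEQ_Suc tendsto_integral_Icc_symmetric)
  moreover have "(\<lambda>n. integral {- real (Suc n)..real (Suc n)} f - integral {- real (Suc n)..real (Suc n)} g)
      \<longlonglongrightarrow> 0"
  proof (rule Lim_null_comparison)
    show "\<forall>\<^sub>F n in sequentially. norm (integral {- real (Suc n)..real (Suc n)} f
        - integral {- real (Suc n)..real (Suc n)} g) \<le> 2 * K * \<bar>\<eta>\<bar> / real (Suc n)"
      unfolding f_def g_def
      by (intro always_eventually allI strip_rectangle_bound[OF \<eta> _ cont diff dec]) simp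
    show "(\<lambda>n. 2 * K * \<bar>\<eta>\<bar> / real (Suc n)) \<longlonglongrightarrow> 0"
      using LIMSEQ_Suc[OF lim_const_over_n[of "2 * K * \<bar>\<eta>\<bar>"]] by simp
  qed
  ultimately show ?thesis
    using LIMSEQ_unique by (fastforce simp: f_def g_def)
qed

lemma norm_integral_le_one_div_one_plus_square:
  fixes f :: "real \<Rightarrow> complex"
  assumes "\<And>x. cmod (f x) \<le> B / (1 + x\<^sup>2)" "0 \<le> B"
  shows "cmod (LINT x|lborel. f x) \<le> B * (LINT x|lborel. 1 / (1 + x\<^sup>2))"
proof (cases "integrable lborel f")
  case True
  have "cmod (LINT x|lborel. f x) \<le> (LINT x|lborel. B * (1 / (1 + x\<^sup>2)))"
    using assms(1)
    by (intro Bochner_Integration.integral_norm_bound_integral[OF True]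
        Bochner_Integration.integrable_mult_right integrable_one_div_one_plus_square) simp
  also have "\<dots> = B * (LINT x|lborel. 1 / (1 + x\<^sup>2))"
    by (rule integral_mult_right_zero)
  finally show ?thesis .
next
  case False
  moreover have "0 \<le> (LINT x|lborel. 1 / (1 + x\<^sup>2 :: real))"
    by (intro integral_nonneg_AE) (auto intro!: AE_I2 add_pos_nonneg)
  ultimately show ?thesis
    using assms(2) by (simp add: not_integrable_integral_eq)
qed

lemma integral_mult_exp_shift_in_strip:
  fixes h :: "complex \<Rightarrow> complex"
  assumes \<eta>: "\<bar>\<eta>\<bar> \<le> c"
    and cont: "continuous_on {w. \<bar>Im w\<bar> \<le> c} h"
    and diff: "finite E" "\<And>w. \<bar>Im w\<bar> \<le> c \<Longrightarrow> w \<notin> E \<Longrightarrow> h field_differentiable at w"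
    and dec: "\<And>w. \<bar>Im w\<bar> \<le> c \<Longrightarrow> cmod (h w) \<le> K / (1 + (Re w)\<^sup>2)"
  shows "(LINT x|lborel. h (of_real x) * exp (\<i> * of_real x * of_real y))
    = (LINT x|lborel. h (of_real x + \<i> * of_real \<eta>) * exp (\<i> * (of_real x + \<i> * of_real \<eta>) * of_real y))"
proof (rule integral_shift_in_strip[OF \<eta> _ diff(1)])
  show "continuous_on {w. \<bar>Im w\<bar> \<le> c} (\<lambda>w. h w * exp (\<i> * w * of_real y))"
    by (intro continuous_intros cont)
  show "(\<lambda>w. h w * exp (\<i> * w * of_real y)) field_differentiable at w" if "\<bar>Im w\<bar> \<le> c" "w \<notin> E" for w
    by (intro field_differentiable_mult diff(2)[OF that])
      (auto intro!: derivative_eq_intros simp: field_differentiable_def)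
  show "cmod (h w * exp (\<i> * w * of_real y)) \<le> K * exp (c * \<bar>y\<bar>) / (1 + (Re w)\<^sup>2)"
    if "\<bar>Im w\<bar> \<le> c" for w
  proof -
    have "- (Im w * y) \<le> \<bar>Im w\<bar> * \<bar>y\<bar>"
      by (simp add: abs_mult[symmetric])
    also have "\<dots> \<le> c * \<bar>y\<bar>"
      using that by (intro mult_right_mono) auto
    finally have exp_le: "cmod (exp (\<i> * w * of_real y)) \<le> exp (c * \<bar>y\<bar>)"
      by simp
    have "0 \<le> K"
      using strip_decay_constant_nonneg[OF order_trans[OF abs_ge_zero \<eta>] dec] .
    then show ?thesis
      using mult_mono[OF dec[OF that] exp_le] by (simp add: norm_mult add_pos_nonneg)
  qed
qed

text \<open>Move the line of integration of \<open>\<integral> h(\<xi>) exp (\<i> \<xi> y) d\<xi>\<close> to \<open>Im \<xi> = c sgn y\<close>.\<close>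

lemma inv_fourier_exp_decay_of_strip:
  fixes h :: "complex \<Rightarrow> complex"
  assumes c: "c \<ge> 0"
    and cont: "continuous_on {w. \<bar>Im w\<bar> \<le> c} h"
    and diff: "finite E" "\<And>w. \<bar>Im w\<bar> \<le> c \<Longrightarrow> w \<notin> E \<Longrightarrow> h field_differentiable at w"
    and dec: "\<And>w. \<bar>Im w\<bar> \<le> c \<Longrightarrow> cmod (h w) \<le> K / (1 + (Re w)\<^sup>2)"
  obtains C where "C > 0" "\<And>y. cmod (inv_fourier (\<lambda>\<xi>. h (of_real \<xi>)) y) \<le> C * exp (- c * \<bar>y\<bar>)"
proof -
  define I where "I = (LINT x|lborel. 1 / (1 + x\<^sup>2) :: real)"
  have I: "I \<ge> 0"
    unfolding I_def by (intro integral_nonneg_AE) (auto intro!: AE_I2 add_pos_nonneg)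
  have K: "K \<ge> 0"
    by (rule strip_decay_constant_nonneg[OF c dec])
  have "cmod (inv_fourier (\<lambda>\<xi>. h (of_real \<xi>)) y) \<le> (K * I + 1) * exp (- c * \<bar>y\<bar>)" for y
  proof -
    define \<eta> where "\<eta> = (if y \<ge> 0 then c else - c)"
    have \<eta>: "\<bar>\<eta>\<bar> \<le> c" "\<eta> * y = c * \<bar>y\<bar>"
      using c by (auto simp: \<eta>_def)
    have "cmod (h (of_real x + \<i> * of_real \<eta>) * exp (\<i> * (of_real x + \<i> * of_real \<eta>) * of_real y))
        \<le> K * exp (- c * \<bar>y\<bar>) / (1 + x\<^sup>2)" for x
      using mult_left_mono[OF dec[of "of_real x + \<i> * of_real \<eta>"] exp_ge_zero[of "- c * \<bar>y\<bar>"]] \<eta>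
      by (simp add: norm_mult mult.commute)
    then have bound: "cmod (LINT x|lborel. h (of_real x + \<i> * of_real \<eta>) * exp (\<i> * (of_real x + \<i> * of_real \<eta>) * of_real y))
        \<le> K * exp (- c * \<bar>y\<bar>) * I"
      unfolding I_def using K by (intro norm_integral_le_one_div_one_plus_square) auto
    have "inv_fourier (\<lambda>\<xi>. h (of_real \<xi>)) y = complex_of_real (1 / sqrt (2 * pi))
        * (LINT x|lborel. h (of_real x) * exp (\<i> * of_real x * of_real y))"
      by (simp add: inv_fourier_def cis_conv_exp mult_ac)
    moreover have "(LINT x|lborel. h (of_real x) * exp (\<i> * of_real x * of_real y))
        = (LINT x|lborel. h (of_real x + \<i> * of_real \<eta>) * exp (\<i> * (of_real x + \<i> * of_real \<eta>) * of_real y))"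
      by (rule integral_mult_exp_shift_in_strip[OF \<eta>(1) cont diff dec])
    ultimately have "inv_fourier (\<lambda>\<xi>. h (of_real \<xi>)) y = complex_of_real (1 / sqrt (2 * pi))
        * (LINT x|lborel. h (of_real x + \<i> * of_real \<eta>) * exp (\<i> * (of_real x + \<i> * of_real \<eta>) * of_real y))"
      by simp
    then have "cmod (inv_fourier (\<lambda>\<xi>. h (of_real \<xi>)) y) = cmod (complex_of_real (1 / sqrt (2 * pi)))
        * cmod (LINT x|lborel. h (of_real x + \<i> * of_real \<eta>) * exp (\<i> * (of_real x + \<i> * of_real \<eta>) * of_real y))"
      by (simp only: norm_mult)
    also have "\<dots> \<le> 1 * (K * exp (- c * \<bar>y\<bar>) * I)"
      by (intro mult_mono norm_fourier_const_le_1 bound) auto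
    also have "\<dots> \<le> (K * I + 1) * exp (- c * \<bar>y\<bar>)"
      by (simp add: algebra_simps)
    finally show ?thesis .
  qed
  then show ?thesis
    using that[of "K * I + 1"] K I by (simp add: add_nonneg_pos)
qed

lemma inv_fourier_rescale:
  assumes "s > 0"
  shows "inv_fourier (\<lambda>\<xi>. f (\<xi> / s)) x = s * inv_fourier f (s * x)"
proof -
  have "(LINT \<xi>|lborel. f (\<xi> / s) * cis (\<xi> * x))
      = \<bar>s\<bar> *\<^sub>R (LINT u|lborel. f ((0 + s * u) / s) * cis ((0 + s * u) * x))"
    using assms by (intro lborel_integral_real_affine) simp
  also have "\<dots> = s * (LINT u|lborel. f u * cis (u * (s * x)))"
    using assms by (simp add: scaleR_conv_of_real mult_ac)
  finally show ?thesis
    by (simp add: inv_fourier_def)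
qed

lemma inv_fourier_moment_quotient_exp_decay:
  assumes \<psi>: "exp_decaying b \<psi>" and g: "exp_decaying b g\<^sub>1" "exp_decaying b g\<^sub>2"
    and weak: "has_weak_deriv \<psi> g\<^sub>1" "has_weak_deriv g\<^sub>1 g\<^sub>2"
    and vanish: "\<forall>k\<le>m. fourier_moment \<psi> (r + k) 0 = 0" and c: "0 < c" "c < b"
  obtains C where "C > 0"
    "\<And>y. cmod (inv_fourier (\<lambda>\<xi>. a * moment_quotient \<psi> r m (of_real \<xi>)) y) \<le> C * exp (- c * \<bar>y\<bar>)"
proof -
  obtain K where "\<And>z. \<bar>Im z\<bar> \<le> c \<Longrightarrow> (1 + cmod z ^ 2) * cmod (fourier_moment \<psi> r z) \<le> K"
    using fourier_moment_decay[OF \<psi> g weak c(2)] by blast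
  then obtain K' where K': "\<And>z. \<bar>Im z\<bar> \<le> c \<Longrightarrow> cmod (moment_quotient \<psi> r m z) \<le> K' / (1 + (Re z)\<^sup>2)"
    using moment_quotient_decay[OF \<psi> c vanish] by blast
  show ?thesis
  proof (rule inv_fourier_exp_decay_of_strip[of c "\<lambda>z. a * moment_quotient \<psi> r m z" "{0}" "cmod a * K'"])
    show "continuous_on {w. \<bar>Im w\<bar> \<le> c} (\<lambda>z. a * moment_quotient \<psi> r m z)"
      by (intro continuous_intros moment_quotient_continuous_on[OF \<psi> c vanish])
    show "(\<lambda>z. a * moment_quotient \<psi> r m z) field_differentiable at w" if "\<bar>Im w\<bar> \<le> c" "w \<notin> {0}" for w
      using that c by (intro field_differentiable_mult field_differentiable_const
          moment_quotient_field_differentiable[OF \<psi>]) auto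
    show "cmod (a * moment_quotient \<psi> r m w) \<le> cmod a * K' / (1 + (Re w)\<^sup>2)" if "\<bar>Im w\<bar> \<le> c" for w
      using mult_left_mono[OF K'[OF that] norm_ge_zero[of a]] by (simp add: norm_mult)
  qed (use c that in auto)
qed

lemma Psi_hat_eq_moment_quotient:
  assumes "exp_decaying b \<psi>" "b > 0"
  shows "Psi_hat \<psi> L r k = (\<lambda>\<xi>. complex_of_real (1 / sqrt (2 * pi)) * (- \<i>) ^ r *
      moment_quotient \<psi> r (L + 1 - r) (of_real (\<xi> / 2 ^ k)))"
  by (simp add: fun_eq_iff Psi_hat_def cderiv_fourier[OF assms] moment_quotient_def)

theorem mainTheorem11:
  fixes b :: real and L r :: nat and \<psi>\<^sub>0 :: "real \<Rightarrow> complex"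
  assumes "b > 0"
    and "L \<ge> 1"
    and "X_space b (L + 1) \<psi>\<^sub>0"
    and "\<forall>s\<le>L + 1. cderiv s (fourier \<psi>\<^sub>0) 0 = 0"
    and "r \<le> L + 1"
  shows "\<forall>b'. 0 < b' \<and> b' < b \<longrightarrow>
           (\<exists>C>0. \<forall>(k::nat) (x::real).
              cmod (inv_fourier (Psi_hat \<psi>\<^sub>0 L r k) x) \<le> C * 2 ^ k * exp (- b' * 2 ^ k * \<bar>x\<bar>))"
proof (intro allI impI)
  fix b' :: real
  assume b': "0 < b' \<and> b' < b"
  obtain g\<^sub>1 g\<^sub>2 where \<psi>: "exp_decaying b \<psi>\<^sub>0" and g: "exp_decaying b g\<^sub>1" "exp_decaying b g\<^sub>2"
    and weak: "has_weak_deriv \<psi>\<^sub>0 g\<^sub>1" "has_weak_deriv g\<^sub>1 g\<^sub>2"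
    using X_space_weak_derivs[OF assms(3)] assms(2) by auto
  have "\<forall>k\<le>L + 1 - r. fourier_moment \<psi>\<^sub>0 (r + k) 0 = 0"
    using assms(4,5) by (auto simp: cderiv_fourier[OF \<psi> assms(1)])
  then obtain C where "C > 0" and C: "\<And>y. cmod (inv_fourier (\<lambda>\<xi>. complex_of_real (1 / sqrt (2 * pi)) * (- \<i>) ^ r *
      moment_quotient \<psi>\<^sub>0 r (L + 1 - r) (of_real \<xi>)) y) \<le> C * exp (- b' * \<bar>y\<bar>)"
    using inv_fourier_moment_quotient_exp_decay[OF \<psi> g weak] b' by blast
  have "cmod (inv_fourier (Psi_hat \<psi>\<^sub>0 L r k) x) \<le> C * 2 ^ k * exp (- b' * 2 ^ k * \<bar>x\<bar>)" for k x
  proof -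
    have "inv_fourier (Psi_hat \<psi>\<^sub>0 L r k) x = complex_of_real (2 ^ k) * inv_fourier (\<lambda>\<xi>.
        complex_of_real (1 / sqrt (2 * pi)) * (- \<i>) ^ r * moment_quotient \<psi>\<^sub>0 r (L + 1 - r) (of_real \<xi>)) (2 ^ k * x)"
      unfolding Psi_hat_eq_moment_quotient[OF \<psi> assms(1)] by (rule inv_fourier_rescale) simp
    then have "cmod (inv_fourier (Psi_hat \<psi>\<^sub>0 L r k) x) = 2 ^ k * cmod (inv_fourier (\<lambda>\<xi>.
        complex_of_real (1 / sqrt (2 * pi)) * (- \<i>) ^ r * moment_quotient \<psi>\<^sub>0 r (L + 1 - r) (of_real \<xi>)) (2 ^ k * x))"
      by (simp only: norm_mult norm_of_real) simp
    also have "\<dots> \<le> 2 ^ k * (C * exp (- b' * \<bar>2 ^ k * x\<bar>))"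
      by (intro mult_left_mono C) simp
    finally show ?thesis
      by (simp add: abs_mult mult_ac)
  qed
  then show "\<exists>C>0. \<forall>(k::nat) (x::real).
      cmod (inv_fourier (Psi_hat \<psi>\<^sub>0 L r k) x) \<le> C * 2 ^ k * exp (- b' * 2 ^ k * \<bar>x\<bar>)"
    using \<open>C > 0\<close> by blast
qed

end
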